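(* Let $q$ be a prime power, $\pi={\rm PG}(2,q)$, $C_1$ a Singer cyclic group of ${\rm PGL}(3,q)$ and $\mathcal B$ the circumscribed bundle of $\pi$ left invariant by $C_1$. Let $\mathcal C,\mathcal C'$ be two distinct conics of $\mathcal B$ and let $g\in C_1$ with $\mathcal C'=\mathcal C^g$. If $\mathcal C\cap\mathcal C'=\{B\}$ and $A\in\mathcal C$ is the point with $A^g=B$, then $B\in PP^g$ for every point $P\in\mathcal C\setminus\{A,B\}$. In particular, the line $BB^g$ is tangent to $\mathcal C$ at $B$ and the line $BB^{g^{-1}}$ is tangent to $\mathcal C'$ at $B$.
   Context: A Singer cyclic group of ${\rm PGL}(3,q)$ is a cyclic group of order $q^2+q+1$ acting regularly on the points of ${\rm PG}(2,q)$. Embedding $\pi$ in ${\rm PG}(2,q^3)$, $C_1$ fixes a unique triangle $\Delta$ with vertices in ${\rm PG}(2,q^3)\setminus{\rm PG}(2,q)$. The circumscribed bundle $\mathcal B$ is the set of non-degenerate conics of $\pi$ whose extensions over ${\rm GF}(q^3)$ contain the three vertices of $\Delta$; it consists of $q^2+q+1$ conics, any two meeting in exactly one point, and it is invariant under $C_1$. For distinct points $X,Y$, $XY$ denotes the line joining them. *)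

theory Defs
  imports "HOL-Analysis.Analysis"
begin

definition proj_pt :: "'a::field ^ 3 \<Rightarrow> ('a ^ 3) set" where
  "proj_pt v = {c *s v | c. c \<noteq> 0}"

definition points :: "('a::field ^ 3) set set" where
  "points = {proj_pt v | v. v \<noteq> 0}"

(* X, Y, Z collinear (rank of representative vectors \<le> 2) *)
definition det3 :: "'a::comm_ring_1 ^ 3 \<Rightarrow> 'a ^ 3 \<Rightarrow> 'a ^ 3 \<Rightarrow> 'a" where
  "det3 x y z = x$1 * (y$2 * z$3 - y$3 * z$2) - x$2 * (y$1 * z$3 - y$3 * z$1)
              + x$3 * (y$1 * z$2 - y$2 * z$1)"

(* the line XY joining two points X, Y (meant for X \<noteq> Y) *)
definition pline :: "('a::field ^ 3) set \<Rightarrow> ('a ^ 3) set \<Rightarrow> ('a ^ 3) set set" where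
  "pline X Y = {P \<in> points. \<exists>x\<in>X. \<exists>y\<in>Y. \<exists>p\<in>P. det3 x y p = 0}"

definition smat :: "'a::field \<Rightarrow> 'a ^ 3 ^ 3 \<Rightarrow> 'a ^ 3 ^ 3" where
  "smat c M = (\<chi> i j. c * M $ i $ j)"

definition pcls :: "'a::field ^ 3 ^ 3 \<Rightarrow> ('a ^ 3 ^ 3) set" where
  "pcls M = {smat c M | c. c \<noteq> 0}"

definition pgl :: "('a::field ^ 3 ^ 3) set set" where
  "pgl = {pcls M | M. invertible M}"

definition pmul :: "('a::field ^ 3 ^ 3) set \<Rightarrow> ('a ^ 3 ^ 3) set \<Rightarrow> ('a ^ 3 ^ 3) set" where
  "pmul X Y = {M ** N | M N. M \<in> X \<and> N \<in> Y}"

fun ppow :: "('a::field ^ 3 ^ 3) set \<Rightarrow> nat \<Rightarrow> ('a ^ 3 ^ 3) set" where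
  "ppow X 0 = pcls (mat 1)"
| "ppow X (Suc k) = pmul X (ppow X k)"

definition mact :: "'a::field ^ 3 ^ 3 \<Rightarrow> ('a ^ 3) set \<Rightarrow> ('a ^ 3) set" where
  "mact M P = (\<lambda>v. M *v v) ` P"

definition pact :: "('a::field ^ 3 ^ 3) set \<Rightarrow> ('a ^ 3) set \<Rightarrow> ('a ^ 3) set" where
  "pact g P = (\<Union>M\<in>g. mact M P)"

definition singer :: "('a::{field,finite} ^ 3 ^ 3) set set \<Rightarrow> bool" where
  "singer C1 \<longleftrightarrow> C1 \<subseteq> pgl \<and> (\<exists>G\<in>pgl. C1 = range (ppow G))
     \<and> card C1 = CARD('a)^2 + CARD('a) + 1
     \<and> (\<forall>P\<in>points. \<forall>Q\<in>points. \<exists>!g. g \<in> C1 \<and> pact g P = Q)"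

(* Conics. A ternary quadratic form
   a x^2 + b y^2 + c z^2 + d xy + e xz + f yz is given by (a,b,c,d,e,f);
   a conic is a class of such forms modulo nonzero scalars. *)
type_synonym 'a qform = "'a \<times> 'a \<times> 'a \<times> 'a \<times> 'a \<times> 'a"

fun qf :: "'a::comm_ring_1 qform \<Rightarrow> 'a ^ 3 \<Rightarrow> 'a" where
  "qf (a, b, c, d, e, f) v = a * v$1^2 + b * v$2^2 + c * v$3^2
      + d * v$1 * v$2 + e * v$1 * v$3 + f * v$2 * v$3"

(* half-discriminant: nonzero iff the conic is non-degenerate (all characteristics) *)
fun qdisc :: "'a::comm_ring_1 qform \<Rightarrow> 'a" where
  "qdisc (a, b, c, d, e, f) = 4*a*b*c + d*e*f - a*f^2 - b*e^2 - c*d^2"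

fun qscale :: "'a::comm_ring_1 \<Rightarrow> 'a qform \<Rightarrow> 'a qform" where
  "qscale t (a, b, c, d, e, f) = (t*a, t*b, t*c, t*d, t*e, t*f)"

fun qmap :: "('a \<Rightarrow> 'b) \<Rightarrow> 'a qform \<Rightarrow> 'b qform" where
  "qmap \<phi> (a, b, c, d, e, f) = (\<phi> a, \<phi> b, \<phi> c, \<phi> d, \<phi> e, \<phi> f)"

definition ccls :: "'a::field qform \<Rightarrow> 'a qform set" where
  "ccls k = {qscale t k | t. t \<noteq> 0}"

definition conics :: "'a::field qform set set" where
  "conics = {ccls k | k. qdisc k \<noteq> 0}"

definition cpts :: "'a::field qform set \<Rightarrow> ('a ^ 3) set set" where
  "cpts K = {P \<in> points. \<forall>k\<in>K. \<forall>v\<in>P. qf k v = 0}"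

definition cimg_rel :: "('a::field ^ 3 ^ 3) set \<Rightarrow> 'a qform set \<Rightarrow> 'a qform set \<Rightarrow> bool" where
  "cimg_rel g K K' \<longleftrightarrow> (\<exists>M\<in>g. \<exists>k\<in>K. \<exists>k'\<in>K'. \<forall>v. qf k' (M *v v) = qf k v)"

definition field_emb :: "('a::field \<Rightarrow> 'b::field) \<Rightarrow> bool" where
  "field_emb \<phi> \<longleftrightarrow> (\<forall>x y. \<phi> (x + y) = \<phi> x + \<phi> y) \<and> (\<forall>x y. \<phi> (x * y) = \<phi> x * \<phi> y)
                   \<and> \<phi> 1 = 1"

definition vmap :: "('a \<Rightarrow> 'b) \<Rightarrow> 'a ^ 3 \<Rightarrow> 'b ^ 3" where
  "vmap \<phi> v = (\<chi> i. \<phi> (v $ i))"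

definition mmap :: "('a \<Rightarrow> 'b) \<Rightarrow> 'a ^ 3 ^ 3 \<Rightarrow> 'b ^ 3 ^ 3" where
  "mmap \<phi> M = (\<chi> i j. \<phi> (M $ i $ j))"

definition sub_points :: "('a::field \<Rightarrow> 'b::field) \<Rightarrow> ('b ^ 3) set set" where
  "sub_points \<phi> = {proj_pt (vmap \<phi> v) | v. v \<noteq> 0}"

definition delta :: "('a::field \<Rightarrow> 'b::field) \<Rightarrow> ('a ^ 3 ^ 3) set set \<Rightarrow> ('b ^ 3) set set" where
  "delta \<phi> C1 = {D \<in> points. D \<notin> sub_points \<phi> \<and> (\<forall>g\<in>C1. \<forall>M\<in>g. mact (mmap \<phi> M) D = D)}"

definition circ_bundle :: "('a::field \<Rightarrow> 'b::field) \<Rightarrow> ('a ^ 3 ^ 3) set set \<Rightarrow> 'a qform set set" where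
  "circ_bundle \<phi> C1 = {K \<in> conics. \<forall>D\<in>delta \<phi> C1. \<forall>k\<in>K. \<forall>w\<in>D. qf (qmap \<phi> k) w = 0}"

definition tangent_at :: "('a::field ^ 3) set set \<Rightarrow> 'a qform set \<Rightarrow> ('a ^ 3) set \<Rightarrow> bool" where
  "tangent_at l K B \<longleftrightarrow> B \<in> cpts K \<and> l \<inter> cpts K = {B}"

end

theory Submission
  imports Defs "HOL-Computational_Algebra.Polynomial"
begin

(*
  Let M be a matrix representing g. M has no eigenvector over GF(q): a fixed point of g would
  force g = 1 by the regularity of C1, and then K' = K. Hence v, M v, M^2 v is a basis for every
  v \<noteq> 0, and as M^(q^3) = M the characteristic polynomial of M divides X^(q^3) - X, so it has
  three distinct roots in GF(q^3). The eigenvectors are the vertices of the triangle: the generator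
  of C1 commutes with M and is therefore diagonal in the same basis.

  In these coordinates g is x \<mapsto> m x (componentwise, with distinct m_i) and a conic through the
  vertices is sum l_i x_j x_k = 0, the image of the line l under the standard quadratic
  transformation x \<mapsto> x\<inverse>. Rescaling by x\<inverse> y\<inverse> shows that x, m x, y are collinear iff
  y\<inverse>, m y\<inverse>, x\<inverse> are. For A, B = m A and P on the conic, the points B\<inverse>, m B\<inverse> = A\<inverse> and
  P\<inverse> lie on l, so P, P^g, B are collinear. If X is on the conic and on the line B B^g, then
  X\<inverse>, m X\<inverse>, B\<inverse> are collinear with X\<inverse>, B\<inverse>, m B\<inverse> on l; as the m_i are distinct this
  forces X = B, so B B^g is tangent. Applying this to g\<inverse> gives the tangent B A of K^g.
*)

section \<open>Linear algebra in dimension three\<close>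

lemma matrix_vector_mult_3:
  "(M *v v) $ i = M$i$1 * v$1 + M$i$2 * v$2 + M$i$3 * v$3" for M :: "'a::semiring_1^3^3"
  by (simp add: matrix_vector_mult_def sum_3)

lemma matrix_matrix_mult_3:
  "(A ** B) $ i $ j = A$i$1 * B$1$j + A$i$2 * B$2$j + A$i$3 * B$3$j" for A :: "'a::semiring_1^3^3"
  by (simp add: matrix_matrix_mult_def sum_3)

lemma matrix_matrix_mult_row: "(A ** B) $ i = A $ i v* B"
  for A :: "'a::comm_semiring_1^'m^'n"
  by (simp add: vec_eq_iff matrix_matrix_mult_def vector_matrix_mult_def mult.commute)

lemma vector_matrix_mult_eq_sum: "x v* A = (\<Sum>i\<in>UNIV. x$i *s A$i)"
  for A :: "'a::comm_semiring_1^'m^'n"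
  using matrix_vector_column[of "transpose A" x] by simp

lemma matrix_vector_mult_eq_0_iff:
  fixes A :: "'a::field^'n^'n"
  assumes "det A \<noteq> 0"
  shows "A *v x = 0 \<longleftrightarrow> x = 0"
  using assms det_nz_iff_inj_gen[of "(*v) A"]
  by (metis injD matrix_of_matrix_vector_mul matrix_vector_mul_linear_gen matrix_vector_mult_0_right)

lemma det_eq_0_imp_kernel:
  fixes A :: "'a::field^'n^'n"
  assumes "det A = 0"
  obtains x where "x \<noteq> 0" "A *v x = 0"
proof -
  have "\<not> inj ((*v) A)"
    using assms det_nz_iff_inj_gen[of "(*v) A"] by simp
  then obtain x y where "x \<noteq> y" "A *v x = A *v y"
    unfolding inj_def by blast
  then show ?thesis
    by (intro that[of "x - y"]) (simp_all add: matrix_vector_mult_diff_distrib)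
qed

lemma mat_matrix_vector_mult: "mat t *v x = t *s x"
  for x :: "'a::comm_semiring_1^'n"
  by (simp add: vec_eq_iff matrix_vector_mult_def mat_def if_distrib if_distribR sum.delta cong: if_cong)

lemma eigenvector_if_det_eq_0:
  fixes M :: "'a::field^'n^'n"
  assumes "det (M - mat t) = 0"
  obtains x where "x \<noteq> 0" "M *v x = t *s x"
proof -
  obtain x where "x \<noteq> 0" "(M - mat t) *v x = 0"
    using det_eq_0_imp_kernel[OF assms] by blast
  then show ?thesis
    using that by (simp add: matrix_vector_mult_diff_rdistrib mat_matrix_vector_mult)
qed

lemma matrix_mult_cancel_right:
  fixes X Y P :: "'a::field^3^3"
  assumes "det P \<noteq> 0" "X ** P = Y ** P"
  shows "X = Y"
proof -
  obtain P' where "P ** P' = mat 1"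
    using assms(1) invertible_det_nz invertible_def by blast
  then show ?thesis
    using arg_cong[OF assms(2), of "\<lambda>Z. Z ** P'"] by (simp add: matrix_mul_assoc[symmetric])
qed

lemma eigenvector_if_left_eigenvector:
  fixes M :: "'a::field^'n^'n"
  assumes "u \<noteq> 0" "u v* M = t *s u"
  obtains x where "x \<noteq> 0" "M *v x = t *s x"
proof -
  have "(transpose M - mat t) *v u = 0"
    using assms(2) by (simp add: matrix_vector_mult_diff_rdistrib mat_matrix_vector_mult)
  moreover have "transpose M - mat t = transpose (M - mat t)"
    by (simp add: transpose_def mat_def vec_eq_iff)
  ultimately have "det (M - mat t) = 0"
    using assms(1) matrix_vector_mult_eq_0_iff det_transpose by metis
  then show ?thesis
    using that by (rule eigenvector_if_det_eq_0)
qed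

definition dot3 :: "'a::comm_ring_1^3 \<Rightarrow> 'a^3 \<Rightarrow> 'a" where
  "dot3 l x = l$1 * x$1 + l$2 * x$2 + l$3 * x$3"

lemma dot3_add: "dot3 l (u + v) = dot3 l u + dot3 l v"
  and dot3_smult: "dot3 l (c *s u) = c * dot3 l u"
  and dot3_zero: "dot3 l 0 = 0"
  by (simp_all add: dot3_def algebra_simps)

lemma dot3_vector_matrix_mult: "dot3 (l v* M) x = dot3 l (M *v x)"
  by (simp add: dot3_def vector_matrix_mult_def matrix_vector_mult_3 sum_3 algebra_simps)

lemma det3_eq_det: "det3 u v w = det (vector [u, v, w] :: 'a::comm_ring_1^3^3)"
  by (simp add: det3_def det_3 algebra_simps)

lemma det3_smult: "det3 (a *s x) (b *s y) (c *s z) = a * b * c * det3 x y z"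
  by (simp add: det3_def algebra_simps)

lemma det3_times: "det3 (s * x) (s * y) (s * z) = s$1 * s$2 * s$3 * det3 x y z"
  by (simp add: det3_def algebra_simps)

lemma det3_same_13: "det3 u v u = 0"
  by (simp add: det3_def algebra_simps)

lemma det3_eq_0_if_zero_column: "x$i = 0 \<Longrightarrow> y$i = 0 \<Longrightarrow> z$i = 0 \<Longrightarrow> det3 x y z = 0"
  using exhaust_3[of i] by (auto simp: det3_def)

lemma det3_lincomb:
  "det3 (a *s u + b *s v + c *s w) v w = a * det3 u v w"
  "det3 u (a *s u + b *s v + c *s w) w = b * det3 u v w"
  "det3 u v (a *s u + b *s v + c *s w) = c * det3 u v w"
  by (simp_all add: det3_def algebra_simps)

lemma det3_nz_imp_independent:
  fixes u v w :: "'a::idom^3"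
  assumes "det3 u v w \<noteq> 0" "a *s u + b *s v + c *s w = 0"
  shows "a = 0" "b = 0" "c = 0"
  using det3_lincomb[where a=a and b=b and c=c and u=u and v=v and w=w] assms by (simp_all add: det3_def)

lemma det3_eq_0_imp_dependent:
  fixes u v w :: "'a::field^3"
  assumes "det3 u v w = 0"
  obtains a b c where "a \<noteq> 0 \<or> b \<noteq> 0 \<or> c \<noteq> 0" "a *s u + b *s v + c *s w = 0"
proof -
  define R :: "'a^3^3" where "R = vector [u, v, w]"
  obtain x where x: "x \<noteq> 0" "transpose R *v x = 0"
    using assms det_eq_0_imp_kernel[of "transpose R"] by (auto simp: det3_eq_det R_def)
  moreover have "transpose R *v x = x$1 *s u + x$2 *s v + x$3 *s w"
    by (simp add: R_def vec_eq_iff vector_matrix_mult_def sum_3 algebra_simps)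
  ultimately show ?thesis
    by (intro that[of "x$1" "x$2" "x$3"]) (auto simp: vec_eq_iff forall_3)
qed

lemma det3_eq_0_if_orthogonal:
  fixes l :: "'a::field^3"
  assumes "l \<noteq> 0" "dot3 l u = 0" "dot3 l v = 0" "dot3 l w = 0"
  shows "det3 u v w = 0"
proof -
  have "(vector [u, v, w] :: 'a^3^3) *v l = 0"
    using assms(2-4) by (simp add: vec_eq_iff forall_3 matrix_vector_mult_3 dot3_def algebra_simps)
  then show ?thesis
    using assms(1) matrix_vector_mult_eq_0_iff by (metis det3_eq_det)
qed

definition vcross :: "'a::comm_ring_1^3 \<Rightarrow> 'a^3 \<Rightarrow> 'a^3" where
  "vcross x y = vector [x$2 * y$3 - x$3 * y$2, x$3 * y$1 - x$1 * y$3, x$1 * y$2 - x$2 * y$1]"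

lemma dot3_vcross: "dot3 (vcross v w) v = 0" "dot3 (vcross v w) w = 0"
  by (simp_all add: dot3_def vcross_def algebra_simps)

lemma vcross_vcross: "vcross (vcross v w) a = dot3 a v *s w - dot3 a w *s v"
  by (simp add: vec_eq_iff forall_3 vcross_def dot3_def algebra_simps)

lemma vcross_zero [simp]: "vcross 0 y = 0" "vcross x 0 = 0"
  by (simp_all add: vcross_def vec_eq_iff forall_3)

lemma vcross_lincomb:
  "vcross (a *s u + b *s v) v = a *s vcross u v"
  "vcross u (a *s u + b *s v) = b *s vcross u v"
  by (simp_all add: vec_eq_iff forall_3 vcross_def algebra_simps)

lemma vcross_eq_0_imp_proportional:
  fixes x y :: "'a::field^3"
  assumes "x \<noteq> 0" "vcross x y = 0"
  obtains t where "y = t *s x"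
proof -
  obtain i where i: "x$i \<noteq> 0"
    using assms(1) by (auto simp: vec_eq_iff)
  have c: "x$2 * y$3 = x$3 * y$2" "x$3 * y$1 = x$1 * y$3" "x$1 * y$2 = x$2 * y$1"
    using assms(2) by (simp_all add: vec_eq_iff forall_3 vcross_def)
  have "x$i * y$j = y$i * x$j" for j
    using c exhaust_3[of i] exhaust_3[of j] by (auto simp: mult.commute)
  then have "y = (y$i / x$i) *s x"
    using i by (simp add: vec_eq_iff field_simps)
  then show ?thesis
    using that by blast
qed

(* If v, M v, M^2 v are dependent, they span an M-invariant plane; its normal vector u is a left
   eigenvector of M. *)
lemma cyclic_vector_if_no_eigenvector:
  fixes M :: "'a::field^3^3"
  assumes no_eigenvector: "\<And>x t. x \<noteq> 0 \<Longrightarrow> M *v x \<noteq> t *s x" and "v \<noteq> 0"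
  shows "det3 v (M *v v) (M *v (M *v v)) \<noteq> 0"
proof
  assume "det3 v (M *v v) (M *v (M *v v)) = 0"
  then obtain a b c where abc: "a \<noteq> 0 \<or> b \<noteq> 0 \<or> c \<noteq> 0"
    "a *s v + b *s (M *v v) + c *s (M *v (M *v v)) = 0"
    by (rule det3_eq_0_imp_dependent)
  define u where "u = vcross v (M *v v)"
  have "u \<noteq> 0"
    using vcross_eq_0_imp_proportional[OF \<open>v \<noteq> 0\<close>] no_eigenvector[OF \<open>v \<noteq> 0\<close>]
    unfolding u_def by metis
  have "c \<noteq> 0"
  proof
    assume "c = 0"
    then have "a *s v + b *s (M *v v) = 0"
      using abc(2) by simp
    then have "a *s u = 0" "b *s u = 0"
      using vcross_lincomb[where a=a and u=v and b=b and v="M *v v"] by (simp_all add: u_def)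
    then show False
      using abc(1) \<open>c = 0\<close> \<open>u \<noteq> 0\<close> by simp
  qed
  have "c * dot3 u (M *v (M *v v)) = dot3 u (a *s v + b *s (M *v v) + c *s (M *v (M *v v)))"
    by (simp add: dot3_add dot3_smult dot3_vcross u_def)
  then have "c * dot3 u (M *v (M *v v)) = 0"
    using abc(2) by (simp add: dot3_zero)
  then have "dot3 (u v* M) v = 0" "dot3 (u v* M) (M *v v) = 0"
    using \<open>c \<noteq> 0\<close> dot3_vcross[of v "M *v v"] by (simp_all add: dot3_vector_matrix_mult u_def)
  then have "vcross u (u v* M) = 0"
    by (simp add: u_def vcross_vcross)
  with \<open>u \<noteq> 0\<close> obtain t where "u v* M = t *s u"
    by (rule vcross_eq_0_imp_proportional)
  with \<open>u \<noteq> 0\<close> obtain x where "x \<noteq> 0" "M *v x = t *s x"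
    by (rule eigenvector_if_left_eigenvector)
  then show False
    using no_eigenvector by blast
qed

section \<open>Eigenvalues over a finite field\<close>

lemma field_power_card_minus_1:
  fixes x :: "'a::{field,finite}"
  assumes "x \<noteq> 0"
  shows "x ^ (CARD('a) - 1) = 1"
proof -
  let ?U = "UNIV - {0::'a}"
  have "(\<Prod>y\<in>?U. x * y) = (\<Prod>y\<in>?U. y)"
    by (rule prod.reindex_bij_witness[of _ "\<lambda>y. y / x" "\<lambda>y. x * y"]) (use assms in auto)
  then have "x ^ card ?U * \<Prod>?U = 1 * \<Prod>?U"
    by (simp add: prod.distrib)
  then have "x ^ card ?U = 1"
    by (subst (asm) mult_cancel_right) simp
  moreover have "card ?U = CARD('a) - 1"
    by (simp add: card_Diff_singleton)
  ultimately show ?thesis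
    by simp
qed

lemma field_power_card_eq_self:
  fixes x :: "'a::{field,finite}"
  shows "x ^ CARD('a) = x"
proof (cases "x = 0")
  case False
  have "x ^ CARD('a) = x * x ^ (CARD('a) - 1)"
    using finite_UNIV_card_ge_0[where 'a='a] by (cases "CARD('a)") simp_all
  then show ?thesis
    using field_power_card_minus_1[OF False] by simp
qed (use finite_UNIV_card_ge_0[where 'a='a] in \<open>simp add: power_0_left\<close>)

lemma card_field_ge_2: "2 \<le> CARD('a::{field,finite})"
  using card_mono[of UNIV "{0::'a, 1}"] by simp

fun mat_pow :: "'a::semiring_1^'n^'n \<Rightarrow> nat \<Rightarrow> 'a^'n^'n" where
  "mat_pow A 0 = mat 1"
| "mat_pow A (Suc n) = A ** mat_pow A n"

lemma mat_pow_add: "mat_pow A (i + j) = mat_pow A i ** mat_pow A j"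
  by (induct i) (simp_all add: matrix_mul_assoc)

lemma mat_pow_mult: "mat_pow A (i * j) = mat_pow (mat_pow A i) j"
  by (induct j) (simp_all add: mat_pow_add)

lemma mat_pow_mat_1 [simp]: "mat_pow (mat 1) n = mat 1"
  by (induct n) simp_all

lemma mat_pow_commute: "A ** mat_pow A n = mat_pow A n ** A"
  by (induct n) (simp_all add: matrix_mul_assoc)

lemma det_mat_pow: "det (mat_pow A n) = det A ^ n"
  for A :: "'a::comm_ring_1^'n^'n"
  by (induct n) (simp_all add: det_mul)

lemma mat_pow_eigenvector: "A *v e = r *s e \<Longrightarrow> mat_pow A n *v e = r ^ n *s e"
  for A :: "'a::field^'n^'n"
  by (induct n) (simp_all add: matrix_vector_mul_assoc[symmetric] vector_scalar_commute)

definition poly_mat_vec :: "'a::field^'n^'n \<Rightarrow> 'a poly \<Rightarrow> 'a^'n \<Rightarrow> 'a^'n" where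
  "poly_mat_vec N p w = foldr (\<lambda>a u. a *s w + N *v u) (coeffs p) 0"

lemma poly_mat_vec_0 [simp]: "poly_mat_vec N 0 w = 0"
  by (simp add: poly_mat_vec_def)

lemma poly_mat_vec_pCons [simp]:
  "poly_mat_vec N (pCons a p) w = a *s w + N *v poly_mat_vec N p w"
  by (cases "p = 0 \<and> a = 0") (auto simp: poly_mat_vec_def cCons_def)

lemma poly_mat_vec_add: "poly_mat_vec N (p + q) w = poly_mat_vec N p w + poly_mat_vec N q w"
  by (induct p q rule: poly_induct2) (simp_all add: matrix_vector_right_distrib algebra_simps)

lemma poly_mat_vec_smult: "poly_mat_vec N (smult c p) w = c *s poly_mat_vec N p w"
  by (induct p) (simp_all add: vector_scalar_commute algebra_simps)

lemma poly_mat_vec_diff: "poly_mat_vec N (p - q) w = poly_mat_vec N p w - poly_mat_vec N q w"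
proof -
  have "poly_mat_vec N (p - q) w = poly_mat_vec N (p + smult (-1) q) w"
    by simp
  then show ?thesis
    by (simp only: poly_mat_vec_add poly_mat_vec_smult) (simp add: vec_eq_iff)
qed

lemma poly_mat_vec_zero_vec [simp]: "poly_mat_vec N p 0 = 0"
  by (induct p) simp_all

lemma poly_mat_vec_mult: "poly_mat_vec N (p * q) w = poly_mat_vec N p (poly_mat_vec N q w)"
  by (induct p) (simp_all add: poly_mat_vec_add poly_mat_vec_smult)

lemma poly_mat_vec_monom: "poly_mat_vec N (monom 1 n) w = mat_pow N n *v w"
  by (induct n) (simp_all add: monom_0 monom_Suc matrix_vector_mul_assoc)

lemma poly_mat_vec_eigenvector: "N *v e = t *s e \<Longrightarrow> poly_mat_vec N p e = poly p t *s e"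
  by (induct p) (simp_all add: vector_scalar_commute algebra_simps)

lemma poly_mat_vec_add_vec: "poly_mat_vec N p (u + v) = poly_mat_vec N p u + poly_mat_vec N p v"
  by (induct p) (simp_all add: matrix_vector_right_distrib algebra_simps)

lemma poly_mat_vec_smult_vec: "poly_mat_vec N p (c *s u) = c *s poly_mat_vec N p u"
  by (induct p) (simp_all add: vector_scalar_commute algebra_simps)

lemma poly_mat_vec_sum_vec: "poly_mat_vec N p (\<Sum>i\<in>I. f i) = (\<Sum>i\<in>I. poly_mat_vec N p (f i))"
  by (induct I rule: infinite_finite_induct) (simp_all add: poly_mat_vec_add_vec)

definition charpoly3 :: "'a::comm_ring_1^3^3 \<Rightarrow> 'a poly" where
  "charpoly3 N = [:- det N,
     N$1$1 * N$2$2 - N$1$2 * N$2$1 + N$1$1 * N$3$3 - N$1$3 * N$3$1 + N$2$2 * N$3$3 - N$2$3 * N$3$2,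
     - (N$1$1 + N$2$2 + N$3$3), 1:]"

lemma degree_charpoly3 [simp]: "degree (charpoly3 N) = 3"
  by (simp add: charpoly3_def)

lemma det_minus_mat_eq_charpoly3: "det (N - mat t) = - poly (charpoly3 N) t"
  by (simp add: charpoly3_def det_3 mat_def algebra_simps)

lemma cayley_hamilton3: "poly_mat_vec N (charpoly3 N) w = 0"
  by (simp add: charpoly3_def vec_eq_iff forall_3 matrix_vector_mult_3 det_3 algebra_simps)

lemma poly_eq_if_degree_le_2:
  "degree r \<le> 2 \<Longrightarrow> r = [:coeff r 0, coeff r 1, coeff r 2:]"
  by (auto simp: poly_eq_iff coeff_pCons coeff_eq_0 numeral_2_eq_2 split: nat.split)

lemma charpoly3_dvd_if_annihilates_cyclic_vector:
  fixes N :: "'a::field^3^3"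
  assumes cyclic: "det3 w (N *v w) (N *v (N *v w)) \<noteq> 0" and "poly_mat_vec N p w = 0"
  shows "charpoly3 N dvd p"
proof -
  define r where "r = p mod charpoly3 N"
  have "p = p div charpoly3 N * charpoly3 N + r"
    by (simp add: r_def)
  then have "poly_mat_vec N r w = 0"
    using assms(2) poly_mat_vec_add[of N "p div charpoly3 N * charpoly3 N" r w]
    by (simp add: poly_mat_vec_mult cayley_hamilton3)
  moreover have "degree r \<le> 2"
  proof -
    have "charpoly3 N \<noteq> 0"
      using degree_charpoly3[of N] by (metis degree_0 zero_neq_numeral)
    then show ?thesis
      using degree_mod_less[of "charpoly3 N" p] by (cases "r = 0") (auto simp: r_def)
  qed
  ultimately have "poly_mat_vec N [:coeff r 0, coeff r 1, coeff r 2:] w = 0"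
    using poly_eq_if_degree_le_2 by metis
  then have "coeff r 0 *s w + coeff r 1 *s (N *v w) + coeff r 2 *s (N *v (N *v w)) = 0"
    by (simp add: matrix_vector_right_distrib vector_scalar_commute algebra_simps)
  then have "coeff r 0 = 0" "coeff r 1 = 0" "coeff r 2 = 0"
    using det3_nz_imp_independent[OF cyclic] by blast+
  then have "r = 0"
    using poly_eq_if_degree_le_2[OF \<open>degree r \<le> 2\<close>] by simp
  then show ?thesis
    by (simp add: r_def dvd_eq_mod_eq_0)
qed

lemma card_roots_of_dvd_X_power_card_minus_X:
  fixes p :: "'a::{field,finite} poly"
  assumes "p dvd monom 1 CARD('a) - monom 1 1"
  shows "card {x. poly p x = 0} = degree p"
proof -
  define f :: "'a poly" where "f = monom 1 CARD('a) - monom 1 1"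
  obtain s where f: "f = p * s"
    using assms by (auto simp: f_def elim: dvdE)
  have "degree f = CARD('a)"
    unfolding f_def diff_conv_add_uminus
    using card_field_ge_2[where 'a='a] by (subst degree_add_eq_left) (simp_all add: degree_monom_eq)
  then have "p \<noteq> 0" "s \<noteq> 0"
    using f card_field_ge_2[where 'a='a] by auto
  with \<open>degree f = CARD('a)\<close> have deg: "degree p + degree s = CARD('a)"
    by (simp add: f degree_mult_eq)
  have "poly f x = 0" for x
    by (simp add: f_def poly_monom field_power_card_eq_self)
  then have "UNIV = {x. poly p x = 0} \<union> {x. poly s x = 0}"
    by (auto simp: f)
  then have "CARD('a) \<le> card {x. poly p x = 0} + card {x. poly s x = 0}"
    by (metis card_Un_le)
  also have "\<dots> \<le> card {x. poly p x = 0} + degree s"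
    using card_poly_roots_bound[OF \<open>s \<noteq> 0\<close>] by simp
  finally show ?thesis
    using deg card_poly_roots_bound[OF \<open>p \<noteq> 0\<close>] by simp
qed

lemma eigenvector_components_eq_0:
  fixes N :: "'a::field^'k^'k" and e :: "'n::finite \<Rightarrow> 'a^'k"
  assumes eigen: "\<And>i. N *v e i = m i *s e i" and distinct: "\<And>i j. i \<noteq> j \<Longrightarrow> m i \<noteq> m j"
    and "(\<Sum>i\<in>UNIV. x i *s e i) = 0"
  shows "x i *s e i = 0"
proof -
  define p where "p = (\<Prod>j\<in>UNIV - {i}. [:- m j, 1:])"
  have "poly p (m j) = 0" if "j \<noteq> i" for j
    using that by (auto simp: p_def poly_prod prod_zero_iff)
  moreover have "poly p (m i) \<noteq> 0"
    using distinct by (simp add: p_def poly_prod prod_zero_iff)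
  moreover have "(\<Sum>j\<in>UNIV. x j * poly p (m j) *s e j) = 0"
    using poly_mat_vec_sum_vec[of N p "\<lambda>j. x j *s e j" UNIV] assms(3)
    by (simp add: poly_mat_vec_smult_vec poly_mat_vec_eigenvector[OF eigen])
  ultimately show ?thesis
    by (simp add: sum.remove[of UNIV i])
qed

lemma det_nz_if_eigenvector_rows:
  fixes N E :: "'a::field^'n^'n"
  assumes eigen: "\<And>i. N *v E$i = m$i *s E$i" and "\<And>i. E$i \<noteq> 0"
    and distinct: "\<And>i j. i \<noteq> j \<Longrightarrow> m$i \<noteq> m$j"
  shows "det E \<noteq> 0"
proof
  assume "det E = 0"
  then obtain x where "x \<noteq> 0" "transpose E *v x = 0"
    using det_eq_0_imp_kernel[of "transpose E"] by (metis det_transpose)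
  then have "(\<Sum>i\<in>UNIV. x$i *s E$i) = 0"
    by (simp add: vector_matrix_mult_eq_sum)
  then have "x$i *s E$i = 0" for i
    using eigenvector_components_eq_0[where e="\<lambda>i. E$i" and m="\<lambda>i. m$i"] eigen distinct
    by blast
  then have "x$i = 0" for i
    using \<open>\<And>i. E$i \<noteq> 0\<close> by (metis vector_mul_eq_0)
  then have "x = 0"
    by (simp add: vec_eq_iff)
  with \<open>x \<noteq> 0\<close> show False ..
qed

locale eigenbasis3 =
  fixes N :: "'a::field^3^3" and E :: "'a^3^3" and m :: "'a^3"
  assumes det_E: "det E \<noteq> 0"
    and eigenvector_row: "N *v E$i = m$i *s E$i"
    and eigenvalues_distinct: "i \<noteq> j \<Longrightarrow> m$i \<noteq> m$j"
begin

definition coords :: "'a^3 \<Rightarrow> 'a^3" where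
  "coords w = w v* matrix_inv E"

lemma matrix_inv_E: "E ** matrix_inv E = mat 1" "matrix_inv E ** E = mat 1"
  using someI_ex[OF det_E[folded invertible_det_nz, unfolded invertible_def]]
  by (simp_all add: matrix_inv_def)

lemma coords_vector_matrix_mult [simp]: "coords (x v* E) = x"
  by (simp add: coords_def vector_matrix_mul_assoc matrix_inv_E)

lemma vector_matrix_mult_coords [simp]: "coords w v* E = w"
  by (simp add: coords_def vector_matrix_mul_assoc matrix_inv_E)

lemma coords_inject: "coords u = coords w \<longleftrightarrow> u = w"
  by (metis vector_matrix_mult_coords)

lemma coords_smult: "coords (c *s w) = c *s coords w"
  by (simp add: coords_def scalar_vector_matrix_assoc)

lemma coords_eq_0_iff: "coords w = 0 \<longleftrightarrow> w = 0"
  by (metis coords_vector_matrix_mult vector_matrix_mult_0 vector_matrix_mult_coords)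

lemma coords_row: "coords (E$i) = axis i 1"
proof -
  have "axis i 1 v* E = E$i"
    using exhaust_3[of i] by (auto simp: vector_matrix_mult_eq_sum sum_3 axis_def)
  then show ?thesis
    by (metis coords_vector_matrix_mult)
qed

lemma mult_vector_matrix_mult: "N *v (x v* E) = (m * x) v* E"
proof -
  have "N *v (x v* E) = x$1 *s (N *v E$1) + x$2 *s (N *v E$2) + x$3 *s (N *v E$3)"
    by (simp add: vector_matrix_mult_eq_sum sum_3 matrix_vector_right_distrib vector_scalar_commute)
  then show ?thesis
    by (simp add: eigenvector_row vector_matrix_mult_eq_sum sum_3 mult.commute)
qed

lemma coords_mult: "coords (N *v w) = m * coords w"
  by (metis mult_vector_matrix_mult coords_vector_matrix_mult vector_matrix_mult_coords)

lemma det3_coords: "det3 u v w = det3 (coords u) (coords v) (coords w) * det E"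
proof -
  have "det3 (x v* E) (y v* E) (z v* E) = det3 x y z * det E" for x y z
  proof -
    have "(vector [x v* E, y v* E, z v* E] :: 'a^3^3) = vector [x, y, z] ** E"
      by (simp add: vec_eq_iff forall_3 matrix_matrix_mult_row)
    then show ?thesis
      by (simp add: det3_eq_det det_mul)
  qed
  from this[of "coords u" "coords v" "coords w"] show ?thesis
    by simp
qed

lemma eigenvector_eq_row:
  assumes "N *v w = m$i *s w"
  shows "w = coords w $ i *s E$i"
proof -
  have "m * coords w = m$i *s coords w"
    using coords_mult[of w] assms by (simp add: coords_smult)
  then have "m$j * coords w $ j = m$i * coords w $ j" for j
    by (simp add: vec_eq_iff)
  then have "coords w $ j = 0" if "j \<noteq> i" for j
    using eigenvalues_distinct[OF that] by (metis mult_cancel_right)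
  then have "coords w = coords w $ i *s axis i 1"
    by (auto simp: vec_eq_iff axis_def)
  then show ?thesis
    by (metis coords_row coords_smult coords_inject)
qed

end

lemma eigenbasis3_exists:
  fixes N :: "'a::{field,finite}^3^3"
  assumes "mat_pow N CARD('a) = N" and cyclic: "det3 w (N *v w) (N *v (N *v w)) \<noteq> 0"
  obtains E m where "eigenbasis3 N E m"
proof -
  have "charpoly3 N dvd monom 1 CARD('a) - monom 1 1"
    by (rule charpoly3_dvd_if_annihilates_cyclic_vector[OF cyclic])
      (use assms(1) in \<open>simp add: poly_mat_vec_diff poly_mat_vec_monom\<close>)
  then have "card {t. poly (charpoly3 N) t = 0} = 3"
    by (simp add: card_roots_of_dvd_X_power_card_minus_X)
  then obtain t1 t2 t3 where roots: "{t. poly (charpoly3 N) t = 0} = {t1, t2, t3}"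
    and "t1 \<noteq> t2" "t2 \<noteq> t3" "t1 \<noteq> t3"
    by (auto simp: card_3_iff)
  define m :: "'a^3" where "m = vector [t1, t2, t3]"
  have distinct: "m$i \<noteq> m$j" if "i \<noteq> j" for i j
    using that \<open>t1 \<noteq> t2\<close> \<open>t2 \<noteq> t3\<close> \<open>t1 \<noteq> t3\<close> exhaust_3[of i] exhaust_3[of j]
    by (auto simp: m_def)
  have "\<exists>e. e \<noteq> 0 \<and> N *v e = m$i *s e" for i
  proof -
    have "m$i \<in> {t1, t2, t3}"
      using exhaust_3[of i] by (auto simp: m_def)
    then have "det (N - mat (m$i)) = 0"
      by (simp add: det_minus_mat_eq_charpoly3 flip: roots)
    then obtain e where "e \<noteq> 0" "N *v e = m$i *s e"
      by (rule eigenvector_if_det_eq_0)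
    then show ?thesis
      by blast
  qed
  then obtain e where e: "\<And>i. e i \<noteq> 0" "\<And>i. N *v e i = m$i *s e i"
    using choice[of "\<lambda>i e. e \<noteq> 0 \<and> N *v e = m$i *s e"] by blast
  define E :: "'a^3^3" where "E = (\<chi> i. e i)"
  have "det E \<noteq> 0"
    using det_nz_if_eigenvector_rows[of N E m] e distinct by (simp add: E_def)
  then have "eigenbasis3 N E m"
    using e distinct by unfold_locales (simp_all add: E_def)
  then show ?thesis
    by (rule that)
qed

section \<open>Points, lines and conics\<close>

lemma proj_pt_self: "v \<in> proj_pt v"
  unfolding proj_pt_def by (auto intro!: exI[of _ 1])

lemma proj_pt_smult:
  fixes v :: "'a::field^3"
  assumes "c \<noteq> 0"
  shows "proj_pt (c *s v) = proj_pt v"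
  unfolding proj_pt_def
proof (intro set_eqI iffI; elim CollectE exE conjE)
  fix x d assume "x = d *s (c *s v)" "d \<noteq> 0"
  then show "x \<in> {d *s v |d. d \<noteq> 0}"
    using assms by (auto intro!: exI[of _ "d * c"])
next
  fix x d assume "x = d *s v" "d \<noteq> 0"
  then show "x \<in> {d *s (c *s v) |d. d \<noteq> 0}"
    using assms by (auto intro!: exI[of _ "d / c"])
qed

lemma proj_pt_eq_iff: "proj_pt u = proj_pt v \<longleftrightarrow> (\<exists>c. c \<noteq> 0 \<and> u = c *s v)"
  for u :: "'a::field^3"
proof
  assume "proj_pt u = proj_pt v"
  then have "u \<in> proj_pt v"
    using proj_pt_self[of u] by simp
  then show "\<exists>c. c \<noteq> 0 \<and> u = c *s v"
    by (auto simp: proj_pt_def)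
qed (auto simp: proj_pt_smult)

lemma proj_pt_in_points: "v \<noteq> 0 \<Longrightarrow> proj_pt v \<in> points"
  by (auto simp: points_def)

lemma pointsE:
  assumes "P \<in> points"
  obtains v where "v \<noteq> 0" "P = proj_pt v"
  using assms by (auto simp: points_def)

lemma mact_proj_pt: "mact M (proj_pt v) = proj_pt (M *v v)"
  for M :: "'a::field^3^3"
  by (auto simp: mact_def proj_pt_def vector_scalar_commute intro!: image_eqI)

lemma smat_smat: "smat a (smat b M) = smat (a * b) M"
  by (simp add: smat_def vec_eq_iff)

lemma smat_1 [simp]: "smat 1 M = M"
  by (simp add: smat_def vec_eq_iff)

lemma smat_matrix_vector_mult: "smat c M *v v = c *s (M *v v)"
  for M :: "'a::field^3^3"
  by (simp add: vec_eq_iff matrix_vector_mult_3 smat_def algebra_simps)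

lemma smat_matrix_matrix_mult: "smat a A ** smat b B = smat (a * b) (A ** B)"
  for A :: "'a::field^3^3"
  by (simp add: vec_eq_iff matrix_matrix_mult_3 smat_def algebra_simps)

lemma smat_matrix_mult_left: "smat c A ** B = smat c (A ** B)"
  and smat_matrix_mult_right: "A ** smat c B = smat c (A ** B)"
  for A :: "'a::field^3^3"
  by (simp_all add: vec_eq_iff matrix_matrix_mult_3 smat_def algebra_simps)

lemma det_smat: "det (smat c A) = c ^ 3 * det A"
  for A :: "'a::field^3^3"
  by (simp add: det_3 smat_def algebra_simps power3_eq_cube)

lemma mat_pow_smat: "mat_pow (smat c A) n = smat (c ^ n) (mat_pow A n)"
  for A :: "'a::field^3^3"
  by (induct n) (simp_all add: smat_matrix_matrix_mult)

lemma pcls_self: "M \<in> pcls M"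
  unfolding pcls_def by (auto intro!: exI[of _ 1])

lemma pcls_smat:
  fixes M :: "'a::field^3^3"
  assumes "c \<noteq> 0"
  shows "pcls (smat c M) = pcls M"
  unfolding pcls_def
proof (intro set_eqI iffI; elim CollectE exE conjE)
  fix X d assume "X = smat d (smat c M)" "d \<noteq> 0"
  then show "X \<in> {smat d M |d. d \<noteq> 0}"
    using assms by (auto intro!: exI[of _ "d * c"] simp: smat_smat)
next
  fix X d assume "X = smat d M" "d \<noteq> 0"
  then show "X \<in> {smat d (smat c M) |d. d \<noteq> 0}"
    using assms by (auto intro!: exI[of _ "d / c"] simp: smat_smat)
qed

lemma pcls_eq_if_mem:
  fixes M :: "'a::field^3^3"
  assumes "N \<in> pcls M"
  shows "pcls N = pcls M"
proof -
  obtain c where "c \<noteq> 0" "N = smat c M"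
    using assms by (auto simp: pcls_def)
  then show ?thesis
    by (simp add: pcls_smat)
qed

lemma pact_pcls: "pact (pcls M) (proj_pt v) = proj_pt (M *v v)"
  for M :: "'a::field^3^3"
proof -
  have "mact N (proj_pt v) = proj_pt (M *v v)" if "N \<in> pcls M" for N
    using that by (auto simp: pcls_def mact_proj_pt smat_matrix_vector_mult proj_pt_smult)
  then have "pact (pcls M) (proj_pt v) = (\<Union>N\<in>pcls M. proj_pt (M *v v))"
    unfolding pact_def by (rule SUP_cong[OF refl])
  then show ?thesis
    using pcls_self[of M] by auto
qed

lemma pact_pcls_inject:
  fixes M :: "'a::field^3^3"
  assumes "det M \<noteq> 0" "P \<in> points" "Q \<in> points" "pact (pcls M) P = pact (pcls M) Q"
  shows "P = Q"
proof -
  obtain p q where pq: "P = proj_pt p" "Q = proj_pt q"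
    using assms(2,3) by (auto elim!: pointsE)
  then obtain c where "c \<noteq> 0" "M *v p = c *s (M *v q)"
    using assms(4) by (auto simp: pact_pcls proj_pt_eq_iff)
  then have "M *v (p - c *s q) = 0"
    by (simp add: matrix_vector_mult_diff_distrib vector_scalar_commute)
  then have "p = c *s q"
    using assms(1) matrix_vector_mult_eq_0_iff by fastforce
  then show ?thesis
    using pq \<open>c \<noteq> 0\<close> by (simp add: proj_pt_smult)
qed

lemma pmul_pcls: "pmul (pcls A) (pcls B) = pcls (A ** B)"
  for A :: "'a::field^3^3"
  unfolding pmul_def pcls_def
proof (intro set_eqI iffI; elim CollectE exE conjE)
  fix X M N a b assume "X = M ** N" "M = smat a A" "a \<noteq> 0" "N = smat b B" "b \<noteq> 0"
  then show "X \<in> {smat c (A ** B) |c. c \<noteq> 0}"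
    by (auto simp: smat_matrix_matrix_mult)
next
  fix X c assume "X = smat c (A ** B)" "c \<noteq> 0"
  then have "X = smat c A ** smat 1 B"
    by (simp only: smat_matrix_matrix_mult mult_1_right)
  with \<open>c \<noteq> 0\<close> show "X \<in> {M ** N |M N. M \<in> {smat c A |c. c \<noteq> 0} \<and> N \<in> {smat c B |c. c \<noteq> 0}}"
    using one_neq_zero by blast
qed

lemma ppow_pcls: "ppow (pcls A) n = pcls (mat_pow A n)"
  for A :: "'a::field^3^3"
  by (induct n) (simp_all add: pmul_pcls)

lemma pline_iff:
  fixes x y z :: "'a::field^3"
  assumes "z \<noteq> 0"
  shows "proj_pt z \<in> pline (proj_pt x) (proj_pt y) \<longleftrightarrow> det3 x y z = 0"
proof
  assume "proj_pt z \<in> pline (proj_pt x) (proj_pt y)"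
  then obtain a b c where "a \<noteq> 0" "b \<noteq> 0" "c \<noteq> 0" "det3 (a *s x) (b *s y) (c *s z) = 0"
    unfolding pline_def by (auto simp: proj_pt_def)
  then show "det3 x y z = 0"
    by (simp add: det3_smult)
next
  assume "det3 x y z = 0"
  then show "proj_pt z \<in> pline (proj_pt x) (proj_pt y)"
    unfolding pline_def using proj_pt_self proj_pt_in_points[OF assms] by blast
qed

lemma qf_zero [simp]: "qf k 0 = 0"
  by (cases k) simp

lemma qf_qscale: "qf (qscale t k) v = t * qf k v"
  by (cases k) (simp add: algebra_simps)

lemma qf_smult: "qf k (c *s v) = c^2 * qf k v"
  by (cases k) (simp add: algebra_simps power2_eq_square)

lemma qscale_qscale: "qscale s (qscale t k) = qscale (s * t) k"
  by (cases k) (simp add: algebra_simps)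

lemma qf_inject:
  fixes k k' :: "'a::comm_ring_1 qform"
  assumes "\<And>v. qf k v = qf k' v"
  shows "k = k'"
proof -
  obtain a b c d e f where k: "k = (a, b, c, d, e, f)"
    by (cases k) auto
  obtain a' b' c' d' e' f' where k': "k' = (a', b', c', d', e', f')"
    by (cases k') auto
  have "a = a'" "b = b'" "c = c'"
    using assms[of "vector [1, 0, 0]"] assms[of "vector [0, 1, 0]"] assms[of "vector [0, 0, 1]"]
    by (simp_all add: k k')
  moreover have "d = d'" "e = e'" "f = f'"
    using assms[of "vector [1, 1, 0]"] assms[of "vector [1, 0, 1]"] assms[of "vector [0, 1, 1]"]
      calculation by (simp_all add: k k')
  ultimately show ?thesis
    by (simp add: k k')
qed

definition polar :: "'a::comm_ring_1 qform \<Rightarrow> 'a^3 \<Rightarrow> 'a^3 \<Rightarrow> 'a" where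
  "polar k u v = qf k (u + v) - qf k u - qf k v"

lemma qf_lincomb3:
  "qf k (a *s u + b *s v + c *s w) = a^2 * qf k u + b^2 * qf k v + c^2 * qf k w
     + a * b * polar k u v + a * c * polar k u w + b * c * polar k v w"
  by (cases k) (simp add: polar_def algebra_simps power2_eq_square)

lemma ccls_qscale:
  fixes k :: "'a::field qform"
  assumes "t \<noteq> 0"
  shows "ccls (qscale t k) = ccls k"
  unfolding ccls_def
proof (intro set_eqI iffI; elim CollectE exE conjE)
  fix x s assume "x = qscale s (qscale t k)" "s \<noteq> 0"
  then show "x \<in> {qscale s k |s. s \<noteq> 0}"
    using assms by (auto intro!: exI[of _ "s * t"] simp: qscale_qscale)
next
  fix x s assume "x = qscale s k" "s \<noteq> 0"
  then show "x \<in> {qscale s (qscale t k) |s. s \<noteq> 0}"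
    using assms by (auto intro!: exI[of _ "s / t"] simp: qscale_qscale)
qed

lemma conic_eq_ccls:
  assumes "K \<in> conics" "k \<in> K"
  shows "K = ccls k"
proof -
  obtain k0 where "K = ccls k0"
    using assms(1) by (auto simp: conics_def)
  moreover obtain t where "t \<noteq> 0" "k = qscale t k0"
    using assms(2) calculation by (auto simp: ccls_def)
  ultimately show ?thesis
    by (simp add: ccls_qscale)
qed

lemma conic_form_nonzero:
  assumes "K \<in> conics" "k \<in> K"
  shows "k \<noteq> (0, 0, 0, 0, 0, 0)"
  using assms by (auto simp: conics_def ccls_def)

lemma cpts_subset_points: "cpts K \<subseteq> points"
  by (auto simp: cpts_def)

lemma cptsE:
  assumes "P \<in> cpts K"
  obtains v where "v \<noteq> 0" "P = proj_pt v"
  using assms by (auto simp: cpts_def elim: pointsE)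

lemma cpts_iff:
  assumes "K \<in> conics" "k \<in> K" "v \<noteq> 0"
  shows "proj_pt v \<in> cpts K \<longleftrightarrow> qf k v = 0"
proof
  assume "proj_pt v \<in> cpts K"
  then show "qf k v = 0"
    using assms(2) proj_pt_self by (auto simp: cpts_def)
next
  assume "qf k v = 0"
  then have "qf k' w = 0" if "k' \<in> K" "w \<in> proj_pt v" for k' w
    using that conic_eq_ccls[OF assms(1,2)] by (auto simp: ccls_def proj_pt_def qf_qscale qf_smult)
  then show "proj_pt v \<in> cpts K"
    using proj_pt_in_points[OF assms(3)] by (auto simp: cpts_def)
qed

lemma cpts_image_iff:
  fixes M :: "'a::field^3^3"
  assumes "K \<in> conics" "K' \<in> conics" "k \<in> K" "k' \<in> K'" "\<And>v. qf k' (M *v v) = qf k v"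
    and "det M \<noteq> 0" "v \<noteq> 0"
  shows "proj_pt (M *v v) \<in> cpts K' \<longleftrightarrow> proj_pt v \<in> cpts K"
proof -
  have "M *v v \<noteq> 0"
    using assms(6,7) matrix_vector_mult_eq_0_iff by blast
  then show ?thesis
    using cpts_iff[OF assms(2,4)] cpts_iff[OF assms(1,3) assms(7)] assms(5) by simp
qed

locale field_embedding =
  fixes \<phi> :: "'a::field \<Rightarrow> 'b::field"
  assumes field_emb: "field_emb \<phi>"
begin

lemma emb_add [simp]: "\<phi> (x + y) = \<phi> x + \<phi> y"
  and emb_mult [simp]: "\<phi> (x * y) = \<phi> x * \<phi> y"
  and emb_1 [simp]: "\<phi> 1 = 1"
  using field_emb by (simp_all add: field_emb_def)

lemma emb_0 [simp]: "\<phi> 0 = 0"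
proof -
  have "\<phi> 0 + \<phi> 0 = \<phi> 0 + 0"
    using emb_add[of 0 0] by simp
  then show ?thesis
    by (simp only: add_left_cancel)
qed

lemma emb_uminus [simp]: "\<phi> (- x) = - \<phi> x"
proof -
  have "\<phi> x + \<phi> (- x) = 0"
    using emb_add[of x "- x"] by simp
  then show ?thesis
    by (simp add: add_eq_0_iff)
qed

lemma emb_diff [simp]: "\<phi> (x - y) = \<phi> x - \<phi> y"
  using emb_add[of x "- y"] by simp

lemma emb_power [simp]: "\<phi> (x ^ n) = \<phi> x ^ n"
  by (induct n) simp_all

lemma emb_eq_0_iff [simp]: "\<phi> x = 0 \<longleftrightarrow> x = 0"
proof
  assume "\<phi> x = 0"
  then have "\<phi> (x * inverse x) = 0"
    by simp
  then show "x = 0"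
    by (metis emb_1 right_inverse zero_neq_one)
qed simp

lemma emb_inject: "\<phi> x = \<phi> y \<longleftrightarrow> x = y"
  using emb_eq_0_iff[of "x - y"] by simp

lemma emb_divide [simp]: "\<phi> (x / y) = \<phi> x / \<phi> y"
proof (cases "y = 0")
  case False
  then have "\<phi> (x / y) * \<phi> y = \<phi> x"
    by (simp flip: emb_mult)
  with False show ?thesis
    by (simp add: eq_divide_eq)
qed simp

lemma vmap_nth [simp]: "vmap \<phi> v $ i = \<phi> (v $ i)"
  by (simp add: vmap_def)

lemma mmap_nth [simp]: "mmap \<phi> M $ i $ j = \<phi> (M $ i $ j)"
  by (simp add: mmap_def)

lemma vmap_smult: "vmap \<phi> (c *s v) = \<phi> c *s vmap \<phi> v"
  by (simp add: vec_eq_iff)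

lemma vmap_eq_0_iff [simp]: "vmap \<phi> v = 0 \<longleftrightarrow> v = 0"
  by (simp add: vec_eq_iff)

lemma vmap_inject: "vmap \<phi> u = vmap \<phi> v \<longleftrightarrow> u = v"
  by (simp add: vec_eq_iff emb_inject)

lemma vmap_matrix_vector_mult: "vmap \<phi> (M *v v) = mmap \<phi> M *v vmap \<phi> v"
  for M :: "'a^3^3"
  by (simp add: vec_eq_iff matrix_vector_mult_3)

lemma mmap_matrix_matrix_mult: "mmap \<phi> (A ** B) = mmap \<phi> A ** mmap \<phi> B"
  for A :: "'a^3^3"
  by (simp add: vec_eq_iff matrix_matrix_mult_3)

lemma mmap_mat: "mmap \<phi> (mat c) = mat (\<phi> c)"
  by (simp add: vec_eq_iff mat_def)

lemma mmap_mat_pow: "mmap \<phi> (mat_pow A n) = mat_pow (mmap \<phi> A) n"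
  for A :: "'a^3^3"
  by (induct n) (simp_all add: mmap_matrix_matrix_mult mmap_mat)

lemma mmap_smat: "mmap \<phi> (smat c M) = smat (\<phi> c) (mmap \<phi> M)"
  by (simp add: vec_eq_iff smat_def)

lemma det_mmap: "det (mmap \<phi> M) = \<phi> (det M)"
  for M :: "'a^3^3"
  by (simp add: det_3)

lemma emb_det3: "\<phi> (det3 x y z) = det3 (vmap \<phi> x) (vmap \<phi> y) (vmap \<phi> z)"
  by (simp add: det3_def)

lemma emb_qf: "\<phi> (qf k v) = qf (qmap \<phi> k) (vmap \<phi> v)"
  by (cases k) simp

lemma proj_pt_eq_if_vmap_proportional:
  assumes "x \<noteq> 0" "y \<noteq> 0" "vmap \<phi> x = t *s vmap \<phi> y"
  shows "proj_pt x = proj_pt y"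
proof -
  obtain i where "y$i \<noteq> 0"
    using assms(2) by (auto simp: vec_eq_iff)
  define c where "c = x$i / y$i"
  have "t = \<phi> c"
    using assms(3) \<open>y$i \<noteq> 0\<close> by (simp add: c_def vec_eq_iff field_simps)
  then have "x = c *s y"
    using assms(3) by (simp add: vmap_smult flip: vmap_inject)
  moreover from this have "c \<noteq> 0"
    using assms(1) by auto
  ultimately show ?thesis
    by (simp add: proj_pt_smult)
qed

end

section \<open>Singer groups\<close>

lemma pcls_mat_pow_mod:
  fixes G :: "'a::field^3^3"
  assumes "c \<noteq> 0" "mat_pow G d = smat c (mat 1)"
  shows "pcls (mat_pow G k) = pcls (mat_pow G (k mod d))"
proof -
  have "mat_pow G k = mat_pow (mat_pow G d) (k div d) ** mat_pow G (k mod d)"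
    using mat_pow_add[of G "d * (k div d)" "k mod d"] by (simp add: mat_pow_mult)
  also have "\<dots> = smat (c ^ (k div d)) (mat_pow G (k mod d))"
    by (simp add: assms(2) mat_pow_smat smat_matrix_mult_left)
  finally show ?thesis
    using assms(1) by (simp add: pcls_smat)
qed

lemma card_range_repeats:
  fixes f :: "nat \<Rightarrow> 'a"
  assumes "card (range f) = n" "n \<ge> 1"
  obtains i j where "i < j" "j \<le> n" "f i = f j"
proof -
  have "\<not> inj_on f {..n}"
  proof
    assume "inj_on f {..n}"
    moreover have "finite (range f)"
      using assms by (intro card_ge_0_finite) simp
    ultimately have "card {..n} \<le> card (range f)"
      by (intro card_inj_on_le) auto
    then show False
      using assms(1) by simp
  qed
  then obtain i j where "i \<le> n" "j \<le> n" "i \<noteq> j" "f i = f j"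
    unfolding inj_on_def by auto
  then show ?thesis
    using that[of i j] that[of j i] by (cases "i < j") auto
qed

lemma mat_pow_scalar_if_card_range:
  fixes G :: "'a::field^3^3"
  assumes "det G \<noteq> 0" and card: "card (range (\<lambda>j. pcls (mat_pow G j))) = n" and "n \<ge> 1"
  obtains c where "c \<noteq> 0" "mat_pow G n = smat c (mat 1)"
proof -
  define f where "f = (\<lambda>j. pcls (mat_pow G j))"
  obtain i j where "i < j" "j \<le> n" "f i = f j"
    using card \<open>n \<ge> 1\<close> unfolding f_def by (rule card_range_repeats)
  have "mat_pow G j \<in> pcls (mat_pow G i)"
    using pcls_self[of "mat_pow G j"] \<open>f i = f j\<close> by (simp add: f_def)
  then obtain c where "c \<noteq> 0" "mat_pow G j = smat c (mat_pow G i)"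
    by (auto simp: pcls_def)
  define d where "d = j - i"
  have "mat_pow G d ** mat_pow G i = smat c (mat 1) ** mat_pow G i"
    using \<open>mat_pow G j = _\<close> \<open>i < j\<close> mat_pow_add[of G d i]
    by (simp add: d_def smat_matrix_mult_left)
  then have period: "mat_pow G d = smat c (mat 1)"
    by (rule matrix_mult_cancel_right[rotated]) (simp add: det_mat_pow assms(1))
  have "f k \<in> f ` {..<d}" for k
    using pcls_mat_pow_mod[OF \<open>c \<noteq> 0\<close> period, of k] \<open>i < j\<close>
    by (auto simp: f_def d_def intro!: image_eqI[of _ _ "k mod d"])
  then have "card (range f) \<le> card (f ` {..<d})"
    by (intro card_mono) auto
  also have "\<dots> \<le> d"
    using card_image_le[of "{..<d}" f] by simp
  finally have "d = n"
    using card \<open>j \<le> n\<close> by (simp add: f_def d_def)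
  then show ?thesis
    using that \<open>c \<noteq> 0\<close> period by blast
qed

(* q^3 = 1 + (q^2 + q + 1)(q - 1), and c^(q - 1) = 1 for every nonzero scalar c. *)
lemma mat_pow_card_cube_if_scalar:
  fixes M :: "'a::{field,finite}^3^3"
  assumes "c \<noteq> 0" "mat_pow M (CARD('a)^2 + CARD('a) + 1) = smat c (mat 1)"
  shows "mat_pow M (CARD('a)^3) = M"
proof -
  define q where "q = CARD('a)"
  define n where "n = q^2 + q + 1"
  have "q ^ 3 = Suc (n * (q - 1))"
    using card_field_ge_2[where 'a='a] unfolding q_def[symmetric] n_def
    by (cases q) (simp_all add: power2_eq_square power3_eq_cube algebra_simps)
  moreover have "mat_pow M (n * (q - 1)) = mat 1"
  proof -
    have "mat_pow M (n * (q - 1)) = mat_pow (smat c (mat 1)) (q - 1)"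
      using assms(2) by (simp only: mat_pow_mult n_def q_def)
    also have "\<dots> = mat 1"
      using field_power_card_minus_1[OF assms(1)] by (simp add: mat_pow_smat q_def)
    finally show ?thesis .
  qed
  ultimately show ?thesis
    by (simp add: q_def)
qed

lemma singer_generator:
  fixes C1 :: "('a::{field,finite}^3^3) set set"
  assumes "singer C1"
  obtains G c where "det G \<noteq> 0" "C1 = range (\<lambda>j. pcls (mat_pow G j))"
    "c \<noteq> 0" "mat_pow G (CARD('a)^2 + CARD('a) + 1) = smat c (mat 1)"
proof -
  obtain G where "invertible G" "C1 = range (ppow (pcls G))"
    using assms by (auto simp: singer_def pgl_def)
  then have "det G \<noteq> 0" "C1 = range (\<lambda>j. pcls (mat_pow G j))"
    by (simp_all add: invertible_det_nz ppow_pcls)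
  moreover from this obtain c where "c \<noteq> 0" "mat_pow G (CARD('a)^2 + CARD('a) + 1) = smat c (mat 1)"
    using assms by (elim mat_pow_scalar_if_card_range) (auto simp: singer_def)
  ultimately show ?thesis
    using that by blast
qed

lemma singer_eq_identity_if_fixes_point:
  assumes "singer C1" "g \<in> C1" "P \<in> points" "pact g P = P"
  shows "g = pcls (mat 1)"
proof -
  have "pcls (mat 1) \<in> C1"
    using assms(1) by (auto simp: singer_def intro: range_eqI[of _ _ 0])
  moreover have "pact (pcls (mat 1)) P = P"
    using assms(3) by (auto elim: pointsE simp: pact_pcls)
  ultimately show ?thesis
    using assms unfolding singer_def by blast
qed

lemma singer_element:
  fixes C1 :: "('a::{field,finite}^3^3) set set"
  assumes "singer C1" "g \<in> C1" "M \<in> g"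
  obtains G where "det G \<noteq> 0" "C1 = range (\<lambda>j. pcls (mat_pow G j))" "M ** G = G ** M"
    "g = pcls M" "det M \<noteq> 0" "mat_pow M (CARD('a)^3) = M"
proof -
  obtain G c where G: "det G \<noteq> 0" "C1 = range (\<lambda>j. pcls (mat_pow G j))"
    and c: "c \<noteq> 0" "mat_pow G (CARD('a)^2 + CARD('a) + 1) = smat c (mat 1)"
    using assms(1) by (rule singer_generator)
  obtain k where g: "g = pcls (mat_pow G k)"
    using assms(2) G(2) by auto
  then obtain s where s: "s \<noteq> 0" "M = smat s (mat_pow G k)"
    using assms(3) by (auto simp: pcls_def)
  have "g = pcls M"
    using assms(3) unfolding g by (rule pcls_eq_if_mem[symmetric])
  moreover have "M ** G = G ** M"
    by (simp add: s(2) smat_matrix_mult_left smat_matrix_mult_right mat_pow_commute)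
  moreover have "det M \<noteq> 0"
    using s G(1) by (simp add: det_smat det_mat_pow)
  moreover have "mat_pow M (CARD('a)^3) = M"
  proof (rule mat_pow_card_cube_if_scalar)
    define n where "n = CARD('a)^2 + CARD('a) + 1"
    have "mat_pow M n = smat (s ^ n) (mat_pow (mat_pow G n) k)"
      by (simp only: s(2) mat_pow_smat mat_pow_mult[symmetric] mult.commute)
    also have "\<dots> = smat (s ^ n * c ^ k) (mat 1)"
      using c(2) by (simp add: n_def mat_pow_smat smat_smat)
    finally show "mat_pow M (CARD('a)^2 + CARD('a) + 1) = smat (s ^ n * c ^ k) (mat 1)"
      by (simp only: n_def)
    show "s ^ n * c ^ k \<noteq> 0"
      using s(1) c(1) by simp
  qed
  ultimately show ?thesis
    using that G(1,2) by blast
qed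

lemma image_conic_no_eigenvector:
  fixes C1 :: "('a::{field,finite}^3^3) set set"
  assumes "singer C1" "g \<in> C1" "M \<in> g" "K \<in> conics" "K' \<in> conics" "K \<noteq> K'" "k \<in> K" "k' \<in> K'"
    and image: "\<And>v. qf k' (M *v v) = qf k v" and "v \<noteq> 0"
  shows "M *v v \<noteq> t *s v"
proof
  assume eigen: "M *v v = t *s v"
  have "det M \<noteq> 0" "g = pcls M"
    using singer_element[OF assms(1-3)] by blast+
  then have "t \<noteq> 0"
    using eigen \<open>v \<noteq> 0\<close> matrix_vector_mult_eq_0_iff by fastforce
  with \<open>g = pcls M\<close> have "pact g (proj_pt v) = proj_pt v"
    by (simp add: pact_pcls eigen proj_pt_smult)
  then have "g = pcls (mat 1)"
    using singer_eq_identity_if_fixes_point[OF assms(1,2)] proj_pt_in_points[OF \<open>v \<noteq> 0\<close>] by blast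
  then obtain c where "c \<noteq> 0" "M = smat c (mat 1)"
    using assms(3) by (auto simp: pcls_def)
  then have "qscale (c^2) k' = k"
    by (intro qf_inject) (simp add: qf_qscale qf_smult smat_matrix_vector_mult flip: image)
  then have "K = K'"
    using conic_eq_ccls[OF assms(4,7)] conic_eq_ccls[OF assms(5,8)] ccls_qscale[of "c^2" k'] \<open>c \<noteq> 0\<close>
    by simp
  with \<open>K \<noteq> K'\<close> show False ..
qed

section \<open>The standard quadratic transformation\<close>

definition vec_inverse :: "'a::field^'n \<Rightarrow> 'a^'n" where
  "vec_inverse x = (\<chi> i. inverse (x$i))"

lemma vec_inverse_nth [simp]: "vec_inverse x $ i = inverse (x$i)"
  by (simp add: vec_inverse_def)

lemma vec_inverse_vec_inverse [simp]: "vec_inverse (vec_inverse x) = x"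
  and vec_inverse_smult: "vec_inverse (c *s x) = inverse c *s vec_inverse x"
  by (simp_all add: vec_eq_iff)

lemma dot3_vec_inverse:
  fixes x l :: "'a::field^3"
  assumes "\<And>i. x$i \<noteq> 0"
  shows "x$2 * x$3 * l$1 + x$1 * x$3 * l$2 + x$1 * x$2 * l$3 = x$1 * x$2 * x$3 * dot3 l (vec_inverse x)"
  using assms by (simp add: dot3_def field_simps)

(* t lies on the line through 1 and n, and 1 on the line through t and n t; with distinct n_i
   this forces t to be a multiple of 1. *)
lemma all_equal_if_det3_diagonal:
  fixes n t :: "'a::field^3"
  assumes distinct: "\<And>i j. i \<noteq> j \<Longrightarrow> n$i \<noteq> n$j"
    and "det3 1 n t = 0" "det3 t (n * t) 1 = 0"
  shows "t = t$1 *s 1"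
proof -
  have d: "n$1 \<noteq> n$2" "n$2 \<noteq> n$3" "n$1 \<noteq> n$3"
    using distinct by simp_all
  define b where "b = (t$1 - t$2) / (n$1 - n$2)"
  define a where "a = t$1 - b * n$1"
  have t1: "t$1 = a + b * n$1"
    by (simp add: a_def)
  have "b * (n$1 - n$2) = t$1 - t$2"
    using d by (simp add: b_def)
  then have t2: "t$2 = a + b * n$2"
    by (simp add: a_def algebra_simps)
  have "(n$2 - n$1) * (t$3 - a - b * n$3) = 0"
    using assms(2) by (simp add: det3_def t1 t2 algebra_simps)
  then have "t$3 - a - b * n$3 = 0"
    using d by simp
  then have t3: "t$3 = a + b * n$3"
    by (simp add: algebra_simps)
  have "b * b * ((n$1 - n$2) * (n$2 - n$3) * (n$3 - n$1)) = 0"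
    using assms(3) by (simp add: det3_def t1 t2 t3 algebra_simps)
  then have "b = 0"
    using d by simp
  then show ?thesis
    using t1 t2 t3 by (simp add: vec_eq_iff forall_3)
qed

lemma proportional_if_on_line_and_collinear:
  fixes l y z n :: "'a::field^3"
  assumes "l \<noteq> 0" and distinct: "\<And>i j. i \<noteq> j \<Longrightarrow> n$i \<noteq> n$j" and z: "\<And>i. z$i \<noteq> 0"
    and "dot3 l z = 0" "dot3 l (n * z) = 0" "dot3 l y = 0"
    and collinear: "det3 y (n * y) z = 0"
  obtains c where "y = c *s z"
proof -
  define t where "t = y * vec_inverse z"
  have y: "y = z * t"
    using z by (simp add: vec_eq_iff t_def)
  have z3: "z$1 * z$2 * z$3 \<noteq> 0"
    using z by simp
  have "det3 z (n * z) y = 0"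
    using det3_eq_0_if_orthogonal assms(1,4-6) by blast
  then have "det3 1 n t = 0"
    using det3_times[of z 1 n t] z3 by (simp add: y mult.commute)
  moreover have "det3 t (n * t) 1 = 0"
    using collinear det3_times[of z t "n * t" 1] z3 by (simp add: y mult.left_commute)
  ultimately have "t = t$1 *s 1"
    by (rule all_equal_if_det3_diagonal[OF distinct, rotated])
  then have "y = t$1 *s z"
    by (simp add: y vec_eq_iff)
  then show ?thesis
    by (rule that)
qed

(* Rescaling the coordinates by x\<inverse> y\<inverse> maps x, m x, y to y\<inverse>, m y\<inverse>, x\<inverse>. *)
lemma det3_vec_inverse_dual:
  fixes x y m :: "'a::field^3"
  assumes "\<And>i. x$i \<noteq> 0" "\<And>i. y$i \<noteq> 0"
  shows "det3 x (m * x) y = 0 \<longleftrightarrow> det3 (vec_inverse y) (m * vec_inverse y) (vec_inverse x) = 0"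
proof -
  define s where "s = vec_inverse x * vec_inverse y"
  have "s * x = vec_inverse y" "s * (m * x) = m * vec_inverse y" "s * y = vec_inverse x"
    using assms by (simp_all add: s_def vec_eq_iff field_simps)
  moreover have "s$1 * s$2 * s$3 \<noteq> 0"
    using assms by (simp add: s_def)
  ultimately show ?thesis
    using det3_times[of s x "m * x" y] by simp
qed

(* The image of the line l under the standard quadratic transformation x \<mapsto> x\<inverse>, i.e. the conic
   l1 x2 x3 + l2 x1 x3 + l3 x1 x2 = 0 without the vertices of the coordinate triangle. *)
definition cremona_conic :: "'a::field^3 \<Rightarrow> ('a^3) set" where
  "cremona_conic l = {x. (\<forall>i. x$i \<noteq> 0) \<and> dot3 l (vec_inverse x) = 0}"

lemma cremona_conic_collinear:
  fixes l m :: "'a::field^3"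
  assumes "l \<noteq> 0" "\<And>i. m$i \<noteq> 0"
    and "p \<in> cremona_conic l" "a \<in> cremona_conic l" "m * a \<in> cremona_conic l"
  shows "det3 p (m * p) (m * a) = 0"
proof -
  have "m * vec_inverse (m * a) = vec_inverse a"
    using assms(2) by (simp add: vec_eq_iff)
  then have "det3 (vec_inverse (m * a)) (m * vec_inverse (m * a)) (vec_inverse p) = 0"
    using assms(3-5) det3_eq_0_if_orthogonal[OF assms(1)] by (simp add: cremona_conic_def)
  then show ?thesis
    using assms(3,5) det3_vec_inverse_dual[of p "m * a" m] by (simp add: cremona_conic_def)
qed

lemma cremona_conic_tangent:
  fixes l m :: "'a::field^3"
  assumes "l \<noteq> 0" "\<And>i. m$i \<noteq> 0" and distinct: "\<And>i j. i \<noteq> j \<Longrightarrow> m$i \<noteq> m$j"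
    and "x \<in> cremona_conic l" "a \<in> cremona_conic l" "m * a \<in> cremona_conic l"
    and collinear: "det3 (m * a) (m * (m * a)) x = 0"
  obtains t where "x = t *s (m * a)"
proof -
  have x: "\<And>i. x$i \<noteq> 0" and b: "\<And>i. (m * a)$i \<noteq> 0"
    using assms(4,6) by (simp_all add: cremona_conic_def)
  have "m * vec_inverse (m * a) = vec_inverse a"
    using assms(2) by (simp add: vec_eq_iff)
  moreover have "det3 (vec_inverse x) (m * vec_inverse x) (vec_inverse (m * a)) = 0"
    using collinear det3_vec_inverse_dual[OF b x] by simp
  ultimately obtain c where "vec_inverse x = c *s vec_inverse (m * a)"
    using proportional_if_on_line_and_collinear[OF assms(1) distinct, of "vec_inverse (m * a)"] b assms(4-6)
    by (auto simp: cremona_conic_def)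
  then have "x = inverse c *s (m * a)"
    by (metis vec_inverse_smult vec_inverse_vec_inverse)
  then show ?thesis
    by (rule that)
qed

(* The tangent statement for the diagonal map m\<inverse> and the point m a. *)
lemma cremona_conic_tangent_inverse:
  fixes l m :: "'a::field^3"
  assumes "l \<noteq> 0" "\<And>i. m$i \<noteq> 0" and distinct: "\<And>i j. i \<noteq> j \<Longrightarrow> m$i \<noteq> m$j"
    and "x \<in> cremona_conic l" "a \<in> cremona_conic l" "m * a \<in> cremona_conic l"
    and collinear: "det3 (m * a) a (m * x) = 0"
  obtains t where "x = t *s a"
proof -
  define n where "n = vec_inverse m"
  have n_a: "n * (m * a) = a" and n_x: "n * (m * x) = x"
    using assms(2) by (simp_all add: n_def vec_eq_iff)
  have "det3 (n * (m * a)) (n * a) (n * (m * x)) = 0"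
    using collinear det3_times[of n "m * a" a "m * x"] by simp
  then have "det3 a (n * a) x = 0"
    by (simp only: n_a n_x)
  moreover have "n$i \<noteq> 0" "i \<noteq> j \<Longrightarrow> n$i \<noteq> n$j" for i j
    using assms(2) distinct by (simp_all add: n_def)
  ultimately obtain t where "x = t *s (n * (m * a))"
    using cremona_conic_tangent[OF assms(1), of n x "m * a"] assms(4-6) n_a by metis
  then show ?thesis
    using n_a by (intro that[of t]) simp
qed

section \<open>Tangents in diagonal coordinates\<close>

locale cremona_frame =
  fixes M :: "'a::field^3^3" and crd :: "'a^3 \<Rightarrow> 'b::field^3" and m l :: "'b^3"
    and K :: "'a qform set"
  assumes det_M: "det M \<noteq> 0"
    and crd_mult: "\<And>v. crd (M *v v) = m * crd v"
    and det3_crd_eq_0_iff: "\<And>x y z. det3 (crd x) (crd y) (crd z) = 0 \<longleftrightarrow> det3 x y z = 0"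
    and proj_pt_eq_if_crd_proportional:
      "\<And>x y t. x \<noteq> 0 \<Longrightarrow> y \<noteq> 0 \<Longrightarrow> crd x = t *s crd y \<Longrightarrow> proj_pt x = proj_pt y"
    and m_nonzero: "\<And>i. m$i \<noteq> 0" and m_distinct: "\<And>i j. i \<noteq> j \<Longrightarrow> m$i \<noteq> m$j"
    and l_nonzero: "l \<noteq> 0"
    and cpts_iff_cremona_conic: "\<And>v. v \<noteq> 0 \<Longrightarrow> proj_pt v \<in> cpts K \<longleftrightarrow> crd v \<in> cremona_conic l"
begin

lemma M_nonzero: "v \<noteq> 0 \<Longrightarrow> M *v v \<noteq> 0"
  using det_M matrix_vector_mult_eq_0_iff by blast

lemma collinear_with_image:
  assumes "a \<noteq> 0" "p \<noteq> 0" "proj_pt a \<in> cpts K" "proj_pt (M *v a) \<in> cpts K" "proj_pt p \<in> cpts K"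
  shows "det3 p (M *v p) (M *v a) = 0"
proof -
  have "crd p \<in> cremona_conic l" "crd a \<in> cremona_conic l" "m * crd a \<in> cremona_conic l"
    using assms M_nonzero by (simp_all add: cpts_iff_cremona_conic flip: crd_mult)
  then have "det3 (crd p) (m * crd p) (m * crd a) = 0"
    by (rule cremona_conic_collinear[OF l_nonzero m_nonzero])
  then show ?thesis
    by (simp add: det3_crd_eq_0_iff flip: crd_mult)
qed

lemma tangent_image:
  assumes "a \<noteq> 0" "x \<noteq> 0" "proj_pt a \<in> cpts K" "proj_pt (M *v a) \<in> cpts K" "proj_pt x \<in> cpts K"
    and "det3 (M *v a) (M *v (M *v a)) x = 0"
  shows "proj_pt x = proj_pt (M *v a)"
proof -
  have "crd x \<in> cremona_conic l" "crd a \<in> cremona_conic l" "m * crd a \<in> cremona_conic l"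
    using assms M_nonzero by (simp_all add: cpts_iff_cremona_conic flip: crd_mult)
  moreover have "det3 (m * crd a) (m * (m * crd a)) (crd x) = 0"
    using assms(6) by (simp add: det3_crd_eq_0_iff flip: crd_mult)
  ultimately obtain t where "crd x = t *s (m * crd a)"
    using cremona_conic_tangent[OF l_nonzero m_nonzero m_distinct] by blast
  then show ?thesis
    by (rule proj_pt_eq_if_crd_proportional[OF assms(2) M_nonzero[OF assms(1)], unfolded crd_mult])
qed

lemma tangent_preimage:
  assumes "a \<noteq> 0" "x \<noteq> 0" "proj_pt a \<in> cpts K" "proj_pt (M *v a) \<in> cpts K" "proj_pt x \<in> cpts K"
    and "det3 (M *v a) a (M *v x) = 0"
  shows "proj_pt x = proj_pt a"
proof -
  have "crd x \<in> cremona_conic l" "crd a \<in> cremona_conic l" "m * crd a \<in> cremona_conic l"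
    using assms M_nonzero by (simp_all add: cpts_iff_cremona_conic flip: crd_mult)
  moreover have "det3 (m * crd a) (crd a) (m * crd x) = 0"
    using assms(6) by (simp add: det3_crd_eq_0_iff flip: crd_mult)
  ultimately obtain t where "crd x = t *s crd a"
    using cremona_conic_tangent_inverse[OF l_nonzero m_nonzero m_distinct] by blast
  then show ?thesis
    by (rule proj_pt_eq_if_crd_proportional[OF assms(2,1)])
qed

lemma image_on_pline:
  assumes "A \<in> cpts K" "pact (pcls M) A \<in> cpts K" "P \<in> cpts K"
  shows "pact (pcls M) A \<in> pline P (pact (pcls M) P)"
proof -
  obtain a p where "a \<noteq> 0" "A = proj_pt a" "p \<noteq> 0" "P = proj_pt p"
    using assms(1,3) by (metis cptsE)
  then show ?thesis
    using assms collinear_with_image[of a p] by (simp add: pact_pcls pline_iff M_nonzero)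
qed

lemma tangent_at_image_line:
  assumes "A \<in> cpts K" "pact (pcls M) A = B" "B \<in> cpts K"
  shows "tangent_at (pline B (pact (pcls M) B)) K B"
proof -
  obtain a where a: "a \<noteq> 0" "A = proj_pt a"
    using assms(1) by (rule cptsE)
  have B: "B = proj_pt (M *v a)"
    using assms(2) a by (simp add: pact_pcls)
  have "X = B" if X: "X \<in> pline B (pact (pcls M) B)" "X \<in> cpts K" for X
  proof -
    obtain x where "x \<noteq> 0" "X = proj_pt x"
      using X(2) by (rule cptsE)
    then show ?thesis
      using X assms a B tangent_image[of a x] by (simp add: pact_pcls pline_iff)
  qed
  moreover have "B \<in> pline B (pact (pcls M) B)"
    using a M_nonzero by (simp add: B pact_pcls pline_iff det3_same_13)
  ultimately show ?thesis
    using assms(3) by (auto simp: tangent_at_def)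
qed

lemma tangent_at_preimage_line:
  assumes "A \<in> cpts K" "pact (pcls M) A = B" "B \<in> cpts K" "B \<in> cpts K'"
    and image: "\<And>v. v \<noteq> 0 \<Longrightarrow> proj_pt (M *v v) \<in> cpts K' \<longleftrightarrow> proj_pt v \<in> cpts K"
  shows "tangent_at (pline B A) K' B"
proof -
  obtain a where a: "a \<noteq> 0" "A = proj_pt a"
    using assms(1) by (rule cptsE)
  have B: "B = proj_pt (M *v a)"
    using assms(2) a by (simp add: pact_pcls)
  have "X = B" if X: "X \<in> pline B A" "X \<in> cpts K'" for X
  proof -
    obtain y where "y \<noteq> 0" "X = proj_pt y"
      using X(2) by (rule cptsE)
    moreover obtain x where "y = M *v x"
      using det_M invertible_det_nz invertible_eq_bij bij_is_surj by (metis surjD)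
    ultimately have "x \<noteq> 0" "X = proj_pt (M *v x)"
      by auto
    then have "proj_pt x = proj_pt a"
      using X assms(1,3) a B image tangent_preimage[of a x] by (simp add: pline_iff M_nonzero)
    then show ?thesis
      using \<open>X = proj_pt (M *v x)\<close> B by (metis pact_pcls)
  qed
  moreover have "B \<in> pline B A"
    using a M_nonzero by (simp add: B pline_iff det3_same_13)
  ultimately show ?thesis
    using assms(4) by (auto simp: tangent_at_def)
qed

end

section \<open>Coordinates adapted to the triangle\<close>

lemma (in eigenbasis3) qf_vector_matrix_mult:
  assumes "\<And>i. qf k (E$i) = 0"
  shows "qf k (x v* E) = x$2 * x$3 * polar k (E$2) (E$3) + x$1 * x$3 * polar k (E$1) (E$3)
    + x$1 * x$2 * polar k (E$1) (E$2)"
  using assms by (simp add: vector_matrix_mult_eq_sum sum_3 qf_lincomb3)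

locale singer_frame = field_embedding \<phi> + eigenbasis3 "mmap \<phi> M" E m
  for \<phi> :: "'a::field \<Rightarrow> 'b::field" and M :: "'a^3^3" and E m +
  fixes C1 :: "('a^3^3) set set" and G :: "'a^3^3"
  assumes C1_eq: "C1 = range (\<lambda>j. pcls (mat_pow G j))"
    and det_G: "det G \<noteq> 0"
    and commute: "M ** G = G ** M"
    and cyclic: "\<And>v. v \<noteq> 0 \<Longrightarrow> det3 v (M *v v) (M *v (M *v v)) \<noteq> 0"
begin

definition crd :: "'a^3 \<Rightarrow> 'b^3" where
  "crd v = coords (vmap \<phi> v)"

lemma crd_mult: "crd (M *v v) = m * crd v"
  by (simp add: crd_def vmap_matrix_vector_mult coords_mult)

lemma emb_det3_crd: "\<phi> (det3 x y z) = det3 (crd x) (crd y) (crd z) * det E"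
  by (simp add: crd_def emb_det3 flip: det3_coords)

lemma det3_crd_eq_0_iff: "det3 (crd x) (crd y) (crd z) = 0 \<longleftrightarrow> det3 x y z = 0"
proof -
  have "det3 x y z = 0 \<longleftrightarrow> \<phi> (det3 x y z) = 0"
    by simp
  also have "\<dots> \<longleftrightarrow> det3 (crd x) (crd y) (crd z) = 0"
    using det_E by (simp only: emb_det3_crd mult_eq_0_iff simp_thms)
  finally show ?thesis
    by simp
qed

lemma crd_nonzero:
  assumes "v \<noteq> 0"
  shows "crd v $ i \<noteq> 0"
proof
  assume "crd v $ i = 0"
  then have "det3 (crd v) (crd (M *v v)) (crd (M *v (M *v v))) = 0"
    by (intro det3_eq_0_if_zero_column[of _ i]) (simp_all add: crd_mult)
  then show False
    using cyclic[OF assms] by (simp add: det3_crd_eq_0_iff)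
qed

lemma proj_pt_eq_if_crd_proportional:
  assumes "x \<noteq> 0" "y \<noteq> 0" "crd x = t *s crd y"
  shows "proj_pt x = proj_pt y"
proof -
  have "coords (vmap \<phi> x) = coords (t *s vmap \<phi> y)"
    using assms(3) by (simp add: crd_def coords_smult)
  then have "vmap \<phi> x = t *s vmap \<phi> y"
    by (simp only: coords_inject)
  then show ?thesis
    by (rule proj_pt_eq_if_vmap_proportional[OF assms(1,2)])
qed

lemma det_M: "det M \<noteq> 0"
proof
  assume "det M = 0"
  then obtain v where "v \<noteq> 0" "M *v v = 0"
    by (rule det_eq_0_imp_kernel)
  then show False
    using cyclic[of v] by (simp add: det3_def)
qed

lemma row_nonzero: "E$i \<noteq> 0"
proof
  assume "E$i = 0"
  then have "axis i 1 = (0::'b^3)"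
    using coords_row[of i] coords_eq_0_iff[of "E$i"] by simp
  then show False
    by (simp add: axis_eq_0_iff)
qed

lemma eigenvalue_nonzero: "m$i \<noteq> 0"
proof
  assume "m$i = 0"
  then have "mmap \<phi> M *v E$i = 0"
    by (simp add: eigenvector_row)
  moreover have "det (mmap \<phi> M) \<noteq> 0"
    using det_M by (simp add: det_mmap)
  ultimately show False
    using row_nonzero matrix_vector_mult_eq_0_iff by blast
qed

lemma G_row_eigenvector:
  obtains r where "r \<noteq> 0" "mmap \<phi> G *v E$i = r *s E$i"
proof -
  have "mmap \<phi> M ** mmap \<phi> G = mmap \<phi> G ** mmap \<phi> M"
    using commute by (simp flip: mmap_matrix_matrix_mult)
  then have "mmap \<phi> M *v (mmap \<phi> G *v E$i) = m$i *s (mmap \<phi> G *v E$i)"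
    by (simp add: matrix_vector_mul_assoc eigenvector_row vector_scalar_commute
        flip: matrix_vector_mul_assoc[of "mmap \<phi> G"])
  then have "mmap \<phi> G *v E$i = coords (mmap \<phi> G *v E$i) $ i *s E$i"
    by (rule eigenvector_eq_row)
  moreover have "mmap \<phi> G *v E$i \<noteq> 0"
  proof -
    have "det (mmap \<phi> G) \<noteq> 0"
      using det_G by (simp add: det_mmap)
    then show ?thesis
      using row_nonzero matrix_vector_mult_eq_0_iff by blast
  qed
  ultimately show ?thesis
    using that by (metis vector_smult_lzero)
qed

lemma row_not_in_sub_points: "proj_pt (E$i) \<notin> sub_points \<phi>"
proof
  assume "proj_pt (E$i) \<in> sub_points \<phi>"
  then obtain v c where "v \<noteq> 0" "c \<noteq> 0" "E$i = c *s vmap \<phi> v"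
    by (auto simp: sub_points_def proj_pt_eq_iff)
  then have "axis i 1 = c *s crd v"
    by (metis coords_row coords_smult crd_def)
  moreover obtain j :: 3 where "j \<noteq> i"
  proof (cases "i = 1")
    case True
    then show ?thesis
      by (intro that[of 2]) simp
  next
    case False
    then show ?thesis
      by (intro that[of 1]) simp
  qed
  ultimately have "(axis i 1 :: 'b^3) $ j = c * crd v $ j" "j \<noteq> i"
    by simp_all
  then show False
    using crd_nonzero[OF \<open>v \<noteq> 0\<close>, of j] \<open>c \<noteq> 0\<close> by (simp add: axis_def)
qed

lemma row_in_delta: "proj_pt (E$i) \<in> delta \<phi> C1"
proof -
  obtain r where r: "r \<noteq> 0" "mmap \<phi> G *v E$i = r *s E$i"
    by (rule G_row_eigenvector)
  have "mact (mmap \<phi> N) (proj_pt (E$i)) = proj_pt (E$i)" if g: "g \<in> C1" "N \<in> g" for g N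
  proof -
    obtain j t where "t \<noteq> 0" "N = smat t (mat_pow G j)"
      using g by (auto simp: C1_eq pcls_def)
    then have "mmap \<phi> N *v E$i = (\<phi> t * r ^ j) *s E$i"
      using mat_pow_eigenvector[OF r(2), of j]
      by (simp add: mmap_smat mmap_mat_pow smat_matrix_vector_mult)
    then show ?thesis
      using \<open>t \<noteq> 0\<close> r(1) by (simp add: mact_proj_pt proj_pt_smult)
  qed
  then show ?thesis
    using row_nonzero row_not_in_sub_points by (simp add: delta_def proj_pt_in_points)
qed

definition conic_line :: "'a qform \<Rightarrow> 'b^3" where
  "conic_line k = vector [polar (qmap \<phi> k) (E$2) (E$3), polar (qmap \<phi> k) (E$1) (E$3),
     polar (qmap \<phi> k) (E$1) (E$2)]"

lemma emb_qf_crd: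
  assumes "K \<in> circ_bundle \<phi> C1" "k \<in> K" "v \<noteq> 0"
  shows "\<phi> (qf k v) = crd v $ 1 * crd v $ 2 * crd v $ 3 * dot3 (conic_line k) (vec_inverse (crd v))"
proof -
  have "qf (qmap \<phi> k) (E$i) = 0" for i
    using assms(1,2) row_in_delta[of i] proj_pt_self[of "E$i"] unfolding circ_bundle_def by blast
  then have "\<phi> (qf k v) = crd v $ 2 * crd v $ 3 * polar (qmap \<phi> k) (E$2) (E$3)
      + crd v $ 1 * crd v $ 3 * polar (qmap \<phi> k) (E$1) (E$3)
      + crd v $ 1 * crd v $ 2 * polar (qmap \<phi> k) (E$1) (E$2)"
    using qf_vector_matrix_mult[of "qmap \<phi> k" "crd v"] by (simp add: emb_qf crd_def)
  then show ?thesis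
    using dot3_vec_inverse[of "crd v" "conic_line k"] crd_nonzero[OF assms(3)]
    by (simp add: conic_line_def)
qed

lemma cpts_iff_cremona_conic:
  assumes "K \<in> circ_bundle \<phi> C1" "k \<in> K" "v \<noteq> 0"
  shows "proj_pt v \<in> cpts K \<longleftrightarrow> crd v \<in> cremona_conic (conic_line k)"
proof -
  have "K \<in> conics"
    using assms(1) by (simp add: circ_bundle_def)
  then have "proj_pt v \<in> cpts K \<longleftrightarrow> \<phi> (qf k v) = 0"
    using cpts_iff[OF _ assms(2,3)] by simp
  then show ?thesis
    using emb_qf_crd[OF assms] crd_nonzero[OF assms(3)] by (simp add: cremona_conic_def)
qed

lemma conic_line_nonzero:
  assumes "K \<in> circ_bundle \<phi> C1" "k \<in> K"
  shows "conic_line k \<noteq> 0"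
proof
  assume "conic_line k = 0"
  then have "qf k v = qf (0, 0, 0, 0, 0, 0) v" for v
    using emb_qf_crd[OF assms, of v] by (cases "v = 0") (simp_all add: dot3_def)
  then have "k = (0, 0, 0, 0, 0, 0)"
    by (rule qf_inject)
  moreover have "K \<in> conics"
    using assms(1) by (simp add: circ_bundle_def)
  ultimately show False
    using conic_form_nonzero assms(2) by blast
qed

lemma cremona_frame:
  assumes "K \<in> circ_bundle \<phi> C1" "k \<in> K"
  shows "cremona_frame M crd m (conic_line k) K"
  using det_M crd_mult det3_crd_eq_0_iff proj_pt_eq_if_crd_proportional eigenvalue_nonzero
    eigenvalues_distinct conic_line_nonzero[OF assms] cpts_iff_cremona_conic[OF assms]
  by unfold_locales

end

lemma circumscribed_bundle_cremona_frame:
  fixes C1 :: "('a::{field,finite} ^ 3 ^ 3) set set" and \<phi> :: "'a \<Rightarrow> 'b::{field,finite}"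
  assumes "singer C1" "field_emb \<phi>" "CARD('b) = CARD('a) ^ 3"
    and "K \<in> circ_bundle \<phi> C1" "K' \<in> circ_bundle \<phi> C1" "K \<noteq> K'"
    and "g \<in> C1" "cimg_rel g K K'"
  obtains M and crd :: "'a^3 \<Rightarrow> 'b^3" and m l where "g = pcls M" "cremona_frame M crd m l K"
    "\<And>v. v \<noteq> 0 \<Longrightarrow> proj_pt (M *v v) \<in> cpts K' \<longleftrightarrow> proj_pt v \<in> cpts K"
proof -
  interpret field_embedding \<phi>
    by unfold_locales (rule assms(2))
  obtain M k k' where M: "M \<in> g" "k \<in> K" "k' \<in> K'" and image: "\<And>v. qf k' (M *v v) = qf k v"
    using assms(8) unfolding cimg_rel_def by blast
  obtain G where G: "det G \<noteq> 0" "C1 = range (\<lambda>j. pcls (mat_pow G j))" "M ** G = G ** M"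
    and "g = pcls M" "det M \<noteq> 0" and period: "mat_pow M (CARD('a)^3) = M"
    using singer_element[OF assms(1,7) M(1)] by blast
  have conics: "K \<in> conics" "K' \<in> conics"
    using assms(4,5) by (simp_all add: circ_bundle_def)
  have cyclic: "det3 v (M *v v) (M *v (M *v v)) \<noteq> 0" if "v \<noteq> 0" for v
    using cyclic_vector_if_no_eigenvector[OF _ that] image_conic_no_eigenvector[OF assms(1,7) M(1)
        conics assms(6) M(2,3) image] by blast
  have "mat_pow (mmap \<phi> M) CARD('b) = mmap \<phi> M"
    using period by (simp add: assms(3) flip: mmap_mat_pow)
  moreover have "det3 (vmap \<phi> (axis 1 1)) (mmap \<phi> M *v vmap \<phi> (axis 1 1))
      (mmap \<phi> M *v (mmap \<phi> M *v vmap \<phi> (axis 1 1))) \<noteq> 0"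
    using cyclic[of "axis 1 1"] by (simp add: axis_eq_0_iff flip: vmap_matrix_vector_mult emb_det3)
  ultimately obtain E m where "eigenbasis3 (mmap \<phi> M) E m"
    by (rule eigenbasis3_exists)
  then interpret singer_frame \<phi> M E m C1 G
    using G cyclic assms(2) by (simp add: singer_frame_def singer_frame_axioms_def field_embedding_def)
  show ?thesis
    using that \<open>g = pcls M\<close> cremona_frame[OF assms(4) M(2)]
      cpts_image_iff[OF conics M(2,3) image \<open>det M \<noteq> 0\<close>] by blast
qed

theorem lemma3p8:
  fixes C1 :: "('a::{field,finite} ^ 3 ^ 3) set set"
    and \<phi> :: "'a \<Rightarrow> 'b::{field,finite}"
    and g :: "('a ^ 3 ^ 3) set"
    and K K' :: "'a qform set"
    and A B :: "('a ^ 3) set"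
  assumes "singer C1"
    and "field_emb \<phi>" and "CARD('b) = CARD('a) ^ 3"
    and "K \<in> circ_bundle \<phi> C1" and "K' \<in> circ_bundle \<phi> C1" and "K \<noteq> K'"
    and "g \<in> C1" and "cimg_rel g K K'"
    and "cpts K \<inter> cpts K' = {B}"
    and "A \<in> cpts K" and "pact g A = B"
  shows "(\<forall>P \<in> cpts K - {A, B}. B \<in> pline P (pact g P))
       \<and> tangent_at (pline B (pact g B)) K B
       \<and> (\<forall>R \<in> points. pact g R = B \<longrightarrow> tangent_at (pline B R) K' B)"
proof -
  obtain M and crd :: "'a^3 \<Rightarrow> 'b^3" and m l where g: "g = pcls M" and "cremona_frame M crd m l K"
    and image: "\<And>v. v \<noteq> 0 \<Longrightarrow> proj_pt (M *v v) \<in> cpts K' \<longleftrightarrow> proj_pt v \<in> cpts K"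
    using circumscribed_bundle_cremona_frame[OF assms(1-8)] by blast
  then interpret cremona_frame M crd m l K
    by simp
  have B: "B \<in> cpts K" "B \<in> cpts K'"
    using assms(9) by auto
  have "B \<in> pline P (pact g P)" if "P \<in> cpts K" for P
    using image_on_pline[OF assms(10) _ that] assms(11) B(1) g by simp
  moreover have "tangent_at (pline B (pact g B)) K B"
    using tangent_at_image_line[OF assms(10) _ B(1)] assms(11) g by simp
  moreover have "R = A" if "R \<in> points" "pact g R = B" for R
    using pact_pcls_inject[OF det_M that(1)] assms(10,11) cpts_subset_points that(2) g by blast
  then have "tangent_at (pline B R) K' B" if "R \<in> points" "pact g R = B" for R
    using tangent_at_preimage_line[OF assms(10) _ B image] assms(11) g that by simp
  ultimately show ?thesis
    by blast
qed

end
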